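(* Let $\vec v\in\mathcal{S}^{n-1}$ and let $U\subseteq\mathbb{R}^{n}$ be open with $U-t\vec v\subseteq U$ for all $t\ge0$. If $w_{1},w_{2}\in\mathcal{E}'(\mathbb{R}^{n})$ are equal on $U$, then $\mathcal{I}_{\vec v}w_{1}$ and $\mathcal{I}_{\vec v}w_{2}$ are equal on $U$.
   Context: For $\phi\in\mathscr{S}(\mathbb{R}^n)$, $\mathcal{X}_{\vec v}\phi(\vec u)=\int_{\mathbb{R}}\phi(\vec u+s\vec v)\,ds$ for $\vec u\in\vec v^\perp$. For a distribution $w$ with $t_{\min}=\inf_{\vec x\in\mathrm{supp}\,w}\vec x\cdot\vec v>-\infty$ (e.g. $w\in\mathcal{E}'$), choose $\psi_0\in\mathcal{C}_0^\infty(\mathbb{R})$ with $\int\psi_0=1$ and $\mathrm{supp}\,\psi_0\subseteq(-\infty,t_{\min})$, set $\mathcal{I}_{\vec v}\phi(\vec u+t\vec v)=\int_{-\infty}^{t}\big(\phi(\vec u+s\vec v)-\mathcal{X}_{\vec v}\phi(\vec u)\psi_0(s)\big)\,ds$ ($\vec u\in\vec v^\perp$, $t\in\mathbb{R}$), and define the distributional directional antiderivative by $\langle\mathcal{I}_{\vec v}w,\phi\rangle=-\langle w,\mathcal{I}_{\vec v}\phi\rangle$; it is independent of the choice of $\psi_0$. Two distributions are equal on an open set $U$ if they agree on all test functions supported in $U$. *)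

theory Defs
  imports "HOL-Analysis.Analysis"
begin

text \<open>Iterated partial derivatives of a real function on \<open>\<real>^n\<close>; the list gives the
 coordinate directions, innermost derivative last in the list.\<close>
fun pderivs :: "'n::finite list \<Rightarrow> (real^'n \<Rightarrow> real) \<Rightarrow> real^'n \<Rightarrow> real" where
  "pderivs [] f = f"
| "pderivs (i # is) f = (\<lambda>x. deriv (\<lambda>t. pderivs is f (x + t *\<^sub>R axis i 1)) 0)"

definition smooth :: "(real^'n::finite \<Rightarrow> real) \<Rightarrow> bool" where
  "smooth f \<longleftrightarrow> (\<forall>is. continuous_on UNIV (pderivs is f) \<and>
      (\<forall>i x. (\<lambda>t. pderivs is f (x + t *\<^sub>R axis i 1)) differentiable (at 0)))"

definition smooth1 :: "(real \<Rightarrow> real) \<Rightarrow> bool" where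
  "smooth1 f \<longleftrightarrow> (\<forall>k x. ((deriv ^^ k) f) differentiable (at x))"

definition test_fun_on :: "(real^'n::finite) set \<Rightarrow> (real^'n \<Rightarrow> real) \<Rightarrow> bool" where
  "test_fun_on U \<phi> \<longleftrightarrow> smooth \<phi> \<and> compact (closure {x. \<phi> x \<noteq> 0})
      \<and> closure {x. \<phi> x \<noteq> 0} \<subseteq> U"

text \<open>Compactly supported distributions \<open>\<E>'(\<real>^n)\<close>: (real-)linear functionals on
 \<open>C^\<infinity>(\<real>^n)\<close> (complex valued; real-linear functionals on real-valued functions
 correspond exactly to complex-linear functionals on complex-valued ones), continuous for
 the Frechet topology of \<open>C^\<infinity>\<close>, i.e. bounded by a seminorm
 \<open>C \<cdot> max_{|\<alpha>|\<le>N} sup_K |\<partial>^\<alpha>\<phi>|\<close> with \<open>K\<close> compact.\<close>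
definition compact_distr :: "((real^'n::finite \<Rightarrow> real) \<Rightarrow> complex) \<Rightarrow> bool" where
  "compact_distr w \<longleftrightarrow>
     (\<forall>\<phi> \<psi>. smooth \<phi> \<longrightarrow> smooth \<psi> \<longrightarrow> w (\<lambda>x. \<phi> x + \<psi> x) = w \<phi> + w \<psi>) \<and>
     (\<forall>c \<phi>. smooth \<phi> \<longrightarrow> w (\<lambda>x. c * \<phi> x) = c *\<^sub>R w \<phi>) \<and>
     (\<exists>K C N. compact K \<and> (\<forall>\<phi> M. smooth \<phi> \<longrightarrow>
         (\<forall>is x. length is \<le> N \<longrightarrow> x \<in> K \<longrightarrow> \<bar>pderivs is \<phi> x\<bar> \<le> M) \<longrightarrow>
         norm (w \<phi>) \<le> C * M))"

definition distr_eq_on ::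
  "(real^'n::finite) set \<Rightarrow> ((real^'n \<Rightarrow> real) \<Rightarrow> complex) \<Rightarrow> ((real^'n \<Rightarrow> real) \<Rightarrow> complex) \<Rightarrow> bool" where
  "distr_eq_on U w1 w2 \<longleftrightarrow> (\<forall>\<phi>. test_fun_on U \<phi> \<longrightarrow> w1 \<phi> = w2 \<phi>)"

definition dsupp :: "((real^'n::finite \<Rightarrow> real) \<Rightarrow> complex) \<Rightarrow> (real^'n) set" where
  "dsupp w = UNIV - \<Union>{V. open V \<and> distr_eq_on V w (\<lambda>_. 0)}"

definition tmin :: "real^'n::finite \<Rightarrow> ((real^'n \<Rightarrow> real) \<Rightarrow> complex) \<Rightarrow> ereal" where
  "tmin v w = Inf ((\<lambda>x. ereal (x \<bullet> v)) ` dsupp w)"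

definition admissible_psi0 :: "real^'n::finite \<Rightarrow> ((real^'n \<Rightarrow> real) \<Rightarrow> complex) \<Rightarrow> (real \<Rightarrow> real) \<Rightarrow> bool" where
  "admissible_psi0 v w \<psi>0 \<longleftrightarrow> smooth1 \<psi>0 \<and> compact (closure {s. \<psi>0 s \<noteq> 0}) \<and>
     (\<psi>0 has_integral 1) UNIV \<and> (\<forall>s \<in> closure {s. \<psi>0 s \<noteq> 0}. ereal s < tmin v w)"

definition xray :: "real^'n::finite \<Rightarrow> (real^'n \<Rightarrow> real) \<Rightarrow> real^'n \<Rightarrow> real" where
  "xray v \<phi> u = integral UNIV (\<lambda>s. \<phi> (u + s *\<^sub>R v))"

text \<open>Directional antiderivative of a function, for unit \<open>v\<close>: writing \<open>x = u + t v\<close> with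
 \<open>u \<in> v\<^sup>\<perp>\<close>, i.e. \<open>t = x\<bullet>v\<close>, \<open>u = x - (x\<bullet>v) v\<close>.\<close>
definition fun_antideriv :: "real^'n::finite \<Rightarrow> (real \<Rightarrow> real) \<Rightarrow> (real^'n \<Rightarrow> real) \<Rightarrow> real^'n \<Rightarrow> real" where
  "fun_antideriv v \<psi>0 \<phi> x =
     (let t = x \<bullet> v; u = x - t *\<^sub>R v in
      integral {..t} (\<lambda>s. \<phi> (u + s *\<^sub>R v) - xray v \<phi> u * \<psi>0 s))"

definition distr_antideriv :: "real^'n::finite \<Rightarrow> ((real^'n \<Rightarrow> real) \<Rightarrow> complex) \<Rightarrow> (real^'n \<Rightarrow> real) \<Rightarrow> complex" where
  "distr_antideriv v w \<phi> = - w (fun_antideriv v (SOME \<psi>0. admissible_psi0 v w \<psi>0) \<phi>)"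

end

theory Submission
  imports Defs
begin

text \<open>For a test function \<open>\<phi>\<close> supported in \<open>U\<close>, the antiderivative \<open>\<I>\<^sub>v \<phi>\<close> equals
  \<open>x \<mapsto> \<integral>\<^sub>-\<^sub>\<infinity>\<^sup>0 \<phi>(x + s v) ds - \<X>\<^sub>v \<phi>(x)\<close> on the half-space beyond the support of \<open>\<psi>\<^sub>0\<close>,
  so it vanishes there at every \<open>x\<close> whose forward ray \<open>x + \<real>\<^sub>>\<^sub>0 v\<close> misses the support of
  \<open>\<phi>\<close>. The other points of that half-space lie in \<open>supp \<phi> - \<real>\<^sub>\<ge>\<^sub>0 v\<close>, a closed subset of
  \<open>U\<close> by the backward invariance of \<open>U\<close>. The support of \<open>w\<^sub>1 - w\<^sub>2\<close> lies outside \<open>U\<close> and beyond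
  the support of \<open>\<psi>\<^sub>0\<close>, so the smooth function \<open>\<I>\<^sub>v \<phi>\<close> vanishes near it, and a compactly
  supported distribution annihilates such functions. The same vanishing argument shows that
  \<open>\<langle>\<I>\<^sub>v w, \<phi>\<rangle>\<close> does not depend on \<open>\<psi>\<^sub>0\<close>, so a single \<open>\<psi>\<^sub>0\<close> admissible for both
  \<open>w\<^sub>1\<close> and \<open>w\<^sub>2\<close> can be used.\<close>

section \<open>Smooth functions on \<open>\<real>^n\<close>\<close>

definition has_partials :: "(real^'n::finite \<Rightarrow> real) \<Rightarrow> bool" where
  "has_partials f \<longleftrightarrow>
     continuous_on UNIV f \<and> (\<forall>i x. (\<lambda>t. f (x + t *\<^sub>R axis i 1)) differentiable (at 0))"

lemma pderivs_append: "pderivs (xs @ ys) f = pderivs xs (pderivs ys f)"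
  by (induction xs) simp_all

lemma pderivs_single: "pderivs [i] f x = deriv (\<lambda>t. f (x + t *\<^sub>R axis i 1)) 0"
  by simp

declare pderivs.simps(2) [simp del]

text \<open>The recursive form of \<open>C\<^sup>n\<close> makes closure properties of \<open>smooth\<close> provable by
  induction on \<open>n\<close>.\<close>

fun smooth_upto :: "nat \<Rightarrow> (real^'n::finite \<Rightarrow> real) \<Rightarrow> bool" where
  "smooth_upto 0 f = True"
| "smooth_upto (Suc n) f \<longleftrightarrow> has_partials f \<and> (\<forall>i. smooth_upto n (pderivs [i] f))"

lemma smooth_upto_iff: "smooth_upto n f \<longleftrightarrow> (\<forall>xs. length xs < n \<longrightarrow> has_partials (pderivs xs f))"
proof (induction n arbitrary: f)
  case 0
  show ?case by simp
next
  case (Suc n)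
  show ?case
  proof
    assume f: "smooth_upto (Suc n) f"
    show "\<forall>xs. length xs < Suc n \<longrightarrow> has_partials (pderivs xs f)"
    proof (intro allI impI)
      fix xs :: "'a list"
      assume "length xs < Suc n"
      then show "has_partials (pderivs xs f)"
        using f Suc.IH by (cases xs rule: rev_cases) (auto simp: pderivs_append)
    qed
  next
    assume H: "\<forall>xs. length xs < Suc n \<longrightarrow> has_partials (pderivs xs f)"
    have "smooth_upto n (pderivs [i] f)" for i
      unfolding Suc.IH using H[rule_format, of "_ @ [i]"] by (auto simp: pderivs_append)
    with H[rule_format, of "[]"] show "smooth_upto (Suc n) f"
      by simp
  qed
qed

lemma smooth_iff_smooth_upto: "smooth f \<longleftrightarrow> (\<forall>n. smooth_upto n f)"
proof -
  have "smooth f \<longleftrightarrow> (\<forall>xs. has_partials (pderivs xs f))"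
    unfolding smooth_def has_partials_def by auto
  also have "\<dots> \<longleftrightarrow> (\<forall>n. smooth_upto n f)"
    unfolding smooth_upto_iff by (metis lessI)
  finally show ?thesis .
qed

lemma smooth_upto_SucD: "smooth_upto (Suc n) f \<Longrightarrow> smooth_upto n f"
  by (induction n arbitrary: f) auto

lemma smooth_has_partials: "smooth f \<Longrightarrow> has_partials f"
  unfolding smooth_iff_smooth_upto by (metis smooth_upto.simps(2))

lemma smooth_pderivs: "smooth f \<Longrightarrow> smooth (pderivs [i] f)"
  unfolding smooth_iff_smooth_upto by (metis smooth_upto.simps(2))

lemma smooth_continuous_on: "smooth f \<Longrightarrow> continuous_on S f"
  using smooth_has_partials has_partials_def continuous_on_subset by blast

lemma DERIV_line_shift:
  fixes x y e :: "'a::real_normed_vector"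
  assumes "((\<lambda>s. f (y + s *\<^sub>R e)) has_real_derivative d) (at 0)" and "y = x + t0 *\<^sub>R e"
  shows "((\<lambda>t. f (x + t *\<^sub>R e)) has_real_derivative d) (at t0)"
proof -
  have "((\<lambda>t. f (y + (t + - t0) *\<^sub>R e)) has_real_derivative d) (at t0)"
    using DERIV_shift[of "\<lambda>s. f (y + s *\<^sub>R e)" d t0 "- t0"] assms(1) by simp
  moreover have "(\<lambda>t. f (y + (t + - t0) *\<^sub>R e)) = (\<lambda>t. f (x + t *\<^sub>R e))"
    using assms(2) by (simp add: algebra_simps)
  ultimately show ?thesis by simp
qed

lemma has_partials_DERIV:
  assumes "has_partials f"
  shows "((\<lambda>t. f (x + t *\<^sub>R axis i 1)) has_real_derivative pderivs [i] f (x + t0 *\<^sub>R axis i 1)) (at t0)"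
proof (rule DERIV_line_shift[OF _ refl])
  show "((\<lambda>s. f (x + t0 *\<^sub>R axis i 1 + s *\<^sub>R axis i 1)) has_real_derivative
      pderivs [i] f (x + t0 *\<^sub>R axis i 1)) (at 0)"
    using assms unfolding has_partials_def
    by (simp add: DERIV_deriv_iff_real_differentiable pderivs_single)
qed

lemma has_partials_DERIV_0:
  "has_partials f \<Longrightarrow> ((\<lambda>t. f (x + t *\<^sub>R axis i 1)) has_real_derivative pderivs [i] f x) (at 0)"
  using has_partials_DERIV[of f x i 0] by simp

lemma has_partialsI:
  assumes "continuous_on UNIV f"
    and "\<And>j y. ((\<lambda>t. f (y + t *\<^sub>R axis j 1)) has_real_derivative g j y) (at 0)"
  shows "has_partials f" and "pderivs [i] f = g i"
proof -
  show "has_partials f"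
    unfolding has_partials_def using assms real_differentiable_def by blast
  show "pderivs [i] f = g i"
    by (rule ext) (simp add: DERIV_imp_deriv[OF assms(2)] pderivs_single)
qed

lemma smooth_upto_const: "smooth_upto n (\<lambda>x::real^'n::finite. c)"
proof (induction n arbitrary: c)
  case (Suc n)
  have "((\<lambda>t. c) has_real_derivative 0) (at 0)" for c :: real
    by simp
  with has_partialsI[of "\<lambda>x::real^'n. c" "\<lambda>_ _. 0"] Suc show ?case
    by simp
qed simp

lemma smooth_upto_add:
  "smooth_upto n f \<Longrightarrow> smooth_upto n g \<Longrightarrow> smooth_upto n (\<lambda>x. f x + g x)"
proof (induction n arbitrary: f g)
  case (Suc n)
  have f: "has_partials f" and g: "has_partials g"
    using Suc.prems by auto
  have "continuous_on UNIV (\<lambda>x. f x + g x)"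
    using f g unfolding has_partials_def by (auto intro: continuous_on_add)
  moreover have "((\<lambda>t. f (x + t *\<^sub>R axis i 1) + g (x + t *\<^sub>R axis i 1)) has_real_derivative
      pderivs [i] f x + pderivs [i] g x) (at 0)" for i x
    using DERIV_add[OF has_partials_DERIV_0[OF f] has_partials_DERIV_0[OF g]] .
  ultimately show ?case
    using has_partialsI[of "\<lambda>x. f x + g x" "\<lambda>i x. pderivs [i] f x + pderivs [i] g x"] Suc
    by simp
qed simp

lemma smooth_upto_mult:
  "smooth_upto n f \<Longrightarrow> smooth_upto n g \<Longrightarrow> smooth_upto n (\<lambda>x. f x * g x)"
proof (induction n arbitrary: f g)
  case (Suc n)
  have f: "has_partials f" and g: "has_partials g"
    using Suc.prems by auto
  have "continuous_on UNIV (\<lambda>x. f x * g x)"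
    using f g unfolding has_partials_def by (auto intro: continuous_on_mult)
  moreover have "((\<lambda>t. f (x + t *\<^sub>R axis i 1) * g (x + t *\<^sub>R axis i 1)) has_real_derivative
      pderivs [i] f x * g x + f x * pderivs [i] g x) (at 0)" for i x
    using DERIV_mult[OF has_partials_DERIV_0[OF f] has_partials_DERIV_0[OF g]]
    by (simp add: mult.commute)
  moreover have "smooth_upto n (\<lambda>x. pderivs [i] f x * g x + f x * pderivs [i] g x)" for i
  proof -
    have "smooth_upto n f" "smooth_upto n g"
      using Suc.prems smooth_upto_SucD by blast+
    with Suc show ?thesis
      by (auto intro!: smooth_upto_add)
  qed
  ultimately show ?case
    using has_partialsI[of "\<lambda>x. f x * g x" "\<lambda>i x. pderivs [i] f x * g x + f x * pderivs [i] g x"] f g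
    by simp
qed simp

lemma smooth_const: "smooth (\<lambda>x. c)"
  unfolding smooth_iff_smooth_upto by (simp add: smooth_upto_const)

lemma smooth_add: "smooth f \<Longrightarrow> smooth g \<Longrightarrow> smooth (\<lambda>x. f x + g x)"
  unfolding smooth_iff_smooth_upto by (simp add: smooth_upto_add)

lemma smooth_mult: "smooth f \<Longrightarrow> smooth g \<Longrightarrow> smooth (\<lambda>x. f x * g x)"
  unfolding smooth_iff_smooth_upto by (simp add: smooth_upto_mult)

lemma smooth_cmult: "smooth f \<Longrightarrow> smooth (\<lambda>x. c * f x)"
  by (rule smooth_mult[OF smooth_const])

lemma smooth_diff: "smooth f \<Longrightarrow> smooth g \<Longrightarrow> smooth (\<lambda>x. f x - g x)"
  using smooth_add[of f "\<lambda>x. (-1) * g x"] smooth_cmult[of g "-1"] by simp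

lemma smooth_sum: "finite S \<Longrightarrow> (\<And>j. j \<in> S \<Longrightarrow> smooth (f j)) \<Longrightarrow> smooth (\<lambda>x. \<Sum>j\<in>S. f j x)"
  by (induction S rule: finite_induct) (auto intro: smooth_add smooth_const)

lemma smooth_prod: "finite S \<Longrightarrow> (\<And>j. j \<in> S \<Longrightarrow> smooth (f j)) \<Longrightarrow> smooth (\<lambda>x. \<Prod>j\<in>S. f j x)"
  by (induction S rule: finite_induct) (auto intro: smooth_mult smooth_const)

lemma smooth_component: "smooth (\<lambda>x::real^'n::finite. x $ j)"
  unfolding smooth_iff_smooth_upto
proof
  fix n
  have c: "continuous_on UNIV (\<lambda>x::real^'n. x $ j)"
    by (intro continuous_intros)
  have d: "((\<lambda>t. (\<lambda>x::real^'n. x $ j) (x + t *\<^sub>R axis i 1)) has_real_derivative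
      (\<lambda>i x. if j = i then 1 else 0) i x) (at 0)" for i x
    by (auto simp: axis_def intro!: derivative_eq_intros)
  show "smooth_upto n (\<lambda>x::real^'n. x $ j)"
    using has_partialsI[OF c d] by (cases n) (auto intro: smooth_upto_const)
qed

lemma smooth_inner: "smooth (\<lambda>x::real^'n::finite. x \<bullet> v)"
  unfolding inner_vec_def inner_real_def
  by (intro smooth_sum smooth_mult smooth_component smooth_const) simp

lemma smooth_dist_sq: "smooth (\<lambda>x::real^'n::finite. (dist x p)\<^sup>2)"
proof -
  have "(\<lambda>x::real^'n. (dist x p)\<^sup>2) = (\<lambda>x. \<Sum>i\<in>UNIV. (x $ i - p $ i) * (x $ i - p $ i))"
    by (simp add: dist_norm power2_norm_eq_inner inner_vec_def)
  then show ?thesis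
    by (simp only:) (intro smooth_sum smooth_mult smooth_diff smooth_component smooth_const; simp)
qed

section \<open>Smooth functions on \<open>\<real>\<close>\<close>

fun differentiable_upto :: "nat \<Rightarrow> (real \<Rightarrow> real) \<Rightarrow> bool" where
  "differentiable_upto 0 g = True"
| "differentiable_upto (Suc n) g \<longleftrightarrow> (\<forall>x. g differentiable at x) \<and> differentiable_upto n (deriv g)"

lemma differentiable_upto_iff:
  "differentiable_upto n g \<longleftrightarrow> (\<forall>k<n. \<forall>x. (deriv ^^ k) g differentiable at x)"
proof (induction n arbitrary: g)
  case (Suc n)
  have "(\<forall>k<Suc n. \<forall>x. (deriv ^^ k) g differentiable at x) \<longleftrightarrow>
      (\<forall>x. g differentiable at x) \<and> (\<forall>k<n. \<forall>x. (deriv ^^ k) (deriv g) differentiable at x)"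
    unfolding All_less_Suc2 by (simp add: funpow_Suc_right del: funpow.simps)
  then show ?case
    using Suc.IH by simp
qed simp

lemma smooth1_iff_differentiable_upto: "smooth1 g \<longleftrightarrow> (\<forall>n. differentiable_upto n g)"
  unfolding smooth1_def differentiable_upto_iff by (metis lessI)

lemma differentiable_upto_SucD: "differentiable_upto (Suc n) f \<Longrightarrow> differentiable_upto n f"
  by (induction n arbitrary: f) auto

lemma smooth1_deriv: "smooth1 g \<Longrightarrow> smooth1 (deriv g)"
  unfolding smooth1_iff_differentiable_upto by (metis differentiable_upto.simps(2))

lemma smooth1_DERIV: "smooth1 g \<Longrightarrow> (g has_real_derivative deriv g x) (at x)"
  unfolding smooth1_iff_differentiable_upto
  by (metis differentiable_upto.simps(2) DERIV_deriv_iff_real_differentiable)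

lemma smooth1_continuous_on: "smooth1 g \<Longrightarrow> continuous_on S g"
  using smooth1_DERIV DERIV_isCont continuous_at_imp_continuous_on by blast

lemma deriv_eqI: "(\<And>x. (f has_real_derivative g x) (at x)) \<Longrightarrow> deriv f = g"
  by (rule ext) (simp add: DERIV_imp_deriv)

lemma differentiable_uptoI:
  assumes "\<And>x. (f has_real_derivative g x) (at x)" and "differentiable_upto n g"
  shows "differentiable_upto (Suc n) f"
  using assms deriv_eqI[of f g] real_differentiable_def by auto

lemma differentiable_upto_const: "differentiable_upto n (\<lambda>x. c)"
proof (induction n arbitrary: c)
  case (Suc n)
  show ?case
    using differentiable_uptoI[of "\<lambda>x. c" "\<lambda>x. 0" n] Suc.IH by simp
qed simp

lemma differentiable_upto_add:
  "differentiable_upto n f \<Longrightarrow> differentiable_upto n g \<Longrightarrow> differentiable_upto n (\<lambda>x. f x + g x)"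
proof (induction n arbitrary: f g)
  case (Suc n)
  then have "(f has_real_derivative deriv f x) (at x)" "(g has_real_derivative deriv g x) (at x)" for x
    by (auto simp: DERIV_deriv_iff_real_differentiable)
  with Suc show ?case
    by (intro differentiable_uptoI[of _ "\<lambda>x. deriv f x + deriv g x"] DERIV_add) auto
qed simp

lemma differentiable_upto_mult:
  "differentiable_upto n f \<Longrightarrow> differentiable_upto n g \<Longrightarrow> differentiable_upto n (\<lambda>x. f x * g x)"
proof (induction n arbitrary: f g)
  case (Suc n)
  then have df: "(f has_real_derivative deriv f x) (at x)"
    and dg: "(g has_real_derivative deriv g x) (at x)" for x
    by (auto simp: DERIV_deriv_iff_real_differentiable)
  have "differentiable_upto n f" "differentiable_upto n g"
    using Suc.prems differentiable_upto_SucD by blast+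
  with Suc have "differentiable_upto n (\<lambda>x. deriv f x * g x + f x * deriv g x)"
    by (auto intro: differentiable_upto_add)
  moreover have "((\<lambda>x. f x * g x) has_real_derivative deriv f x * g x + f x * deriv g x) (at x)" for x
    using DERIV_mult[OF df dg] by (simp add: ac_simps)
  ultimately show ?case
    by (intro differentiable_uptoI)
qed simp

lemma differentiable_upto_affine:
  "smooth1 g \<Longrightarrow> differentiable_upto n (\<lambda>s. c * g (a * s + b))"
proof (induction n arbitrary: g c)
  case (Suc n)
  have "((\<lambda>s. c * g (a * s + b)) has_real_derivative (c * a) * deriv g (a * x + b)) (at x)" for x
  proof -
    have "((\<lambda>s. g (a * s + b)) has_real_derivative deriv g (a * x + b) * a) (at x)"
      by (rule DERIV_chain2[OF smooth1_DERIV[OF Suc.prems]]) (auto intro!: derivative_eq_intros)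
    from DERIV_cmult[OF this, of c] show ?thesis
      by (simp add: algebra_simps)
  qed
  with Suc.IH smooth1_deriv[OF Suc.prems] show ?case
    by (intro differentiable_uptoI) auto
qed simp

lemma smooth1_affine: "smooth1 g \<Longrightarrow> smooth1 (\<lambda>s. c * g (a * s + b))"
  unfolding smooth1_iff_differentiable_upto[of "\<lambda>s. c * g (a * s + b)"]
  using differentiable_upto_affine by blast

lemma smooth1_mult: "smooth1 f \<Longrightarrow> smooth1 g \<Longrightarrow> smooth1 (\<lambda>x. f x * g x)"
  unfolding smooth1_iff_differentiable_upto using differentiable_upto_mult by blast

lemma smooth1_add: "smooth1 f \<Longrightarrow> smooth1 g \<Longrightarrow> smooth1 (\<lambda>x. f x + g x)"
  unfolding smooth1_iff_differentiable_upto using differentiable_upto_add by blast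

lemma smooth1_const: "smooth1 (\<lambda>x. c)"
  unfolding smooth1_iff_differentiable_upto using differentiable_upto_const by blast

lemma smooth_comp_smooth1:
  assumes "smooth q" and "smooth1 g"
  shows "smooth (\<lambda>x. g (q x))"
proof -
  have "\<forall>g. smooth1 g \<longrightarrow> smooth_upto n (\<lambda>x. g (q x))" for n
  proof (induction n)
    case (Suc n)
    show ?case
    proof (intro allI impI)
      fix g
      assume g: "smooth1 g"
      have c: "continuous_on UNIV (\<lambda>x. g (q x))"
        using continuous_on_compose2[OF smooth1_continuous_on[OF g, of UNIV]
            smooth_continuous_on[OF assms(1), of UNIV]]
        by simp
      have d: "((\<lambda>t. (\<lambda>x. g (q x)) (x + t *\<^sub>R axis i 1)) has_real_derivative
          (\<lambda>i x. deriv g (q x) * pderivs [i] q x) i x) (at 0)" for i x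
        using DERIV_chain2[OF smooth1_DERIV[OF g] has_partials_DERIV_0[OF smooth_has_partials[OF assms(1)]]]
        by simp
      have "smooth_upto n (\<lambda>x. deriv g (q x) * pderivs [i] q x)" for i
      proof (rule smooth_upto_mult)
        show "smooth_upto n (\<lambda>x. deriv g (q x))"
          using Suc.IH smooth1_deriv[OF g] by blast
        show "smooth_upto n (pderivs [i] q)"
          using smooth_pderivs[OF assms(1)] smooth_iff_smooth_upto by blast
      qed
      then show "smooth_upto (Suc n) (\<lambda>x. g (q x))"
        using has_partialsI[OF c d] by simp
    qed
  qed simp
  then show ?thesis
    using assms(2) unfolding smooth_iff_smooth_upto by blast
qed

subsection \<open>The flat function \<open>exp (-1/s)\<close> and bump functions\<close>

definition flat_exp :: "real poly \<Rightarrow> real \<Rightarrow> real" where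
  "flat_exp P s = (if s > 0 then poly P (inverse s) * exp (- inverse s) else 0)"

text \<open>For \<open>s > 0\<close>, \<open>d/ds (P(1/s) e\<^sup>-\<^sup>1\<^sup>/\<^sup>s) = s\<^sup>-\<^sup>2 (P(1/s) - P'(1/s)) e\<^sup>-\<^sup>1\<^sup>/\<^sup>s\<close>.\<close>

definition flat_exp_deriv_poly :: "real poly \<Rightarrow> real poly" where
  "flat_exp_deriv_poly P = [:0, 0, 1:] * (P - pderiv P)"

lemma poly_times_exp_neg_tendsto_0: "((\<lambda>x. poly (R::real poly) x * exp (- x)) \<longlongrightarrow> 0) at_top"
proof -
  have "((\<lambda>x. \<Sum>i\<le>degree R. coeff R i * (x ^ i / exp x)) \<longlongrightarrow> (\<Sum>i\<le>degree R. coeff R i * 0)) at_top"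
    by (intro tendsto_sum tendsto_mult tendsto_const tendsto_power_div_exp_0)
  moreover have "(\<lambda>x. \<Sum>i\<le>degree R. coeff R i * (x ^ i / exp x)) = (\<lambda>x. poly R x * exp (- x))"
    by (auto simp: poly_altdef sum_divide_distrib exp_minus divide_inverse[symmetric])
  ultimately show ?thesis
    by simp
qed

lemma flat_exp_DERIV_pos:
  assumes "s > 0"
  shows "(flat_exp P has_real_derivative flat_exp (flat_exp_deriv_poly P) s) (at s)"
proof -
  have d1: "((\<lambda>s. poly P (inverse s)) has_real_derivative
      poly (pderiv P) (inverse s) * (- (inverse s ^ Suc (Suc 0)))) (at s)"
    by (rule DERIV_chain2[OF poly_DERIV DERIV_inverse]) (use assms in simp)
  have d2: "((\<lambda>s. exp (- inverse s)) has_real_derivative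
      exp (- inverse s) * (- (- (inverse s ^ Suc (Suc 0))))) (at s)"
    by (rule DERIV_chain2[OF DERIV_exp DERIV_minus[OF DERIV_inverse]]) (use assms in simp)
  have "poly (pderiv P) (inverse s) * (- (inverse s ^ Suc (Suc 0))) * exp (- inverse s) +
      exp (- inverse s) * (- (- (inverse s ^ Suc (Suc 0)))) * poly P (inverse s) =
      flat_exp (flat_exp_deriv_poly P) s"
    using assms by (simp add: flat_exp_def flat_exp_deriv_poly_def algebra_simps power2_eq_square)
  with DERIV_mult[OF d1 d2]
  have "((\<lambda>s. poly P (inverse s) * exp (- inverse s)) has_real_derivative
      flat_exp (flat_exp_deriv_poly P) s) (at s)"
    by simp
  then show ?thesis
    by (rule has_field_derivative_transform_within_open[of _ _ _ "{0<..}"])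
      (use assms in \<open>auto simp: flat_exp_def\<close>)
qed

lemma flat_exp_DERIV_neg:
  assumes "s < 0"
  shows "(flat_exp P has_real_derivative flat_exp (flat_exp_deriv_poly P) s) (at s)"
proof -
  have "((\<lambda>s. 0) has_real_derivative 0) (at s)"
    by simp
  then have "(flat_exp P has_real_derivative 0) (at s)"
    by (rule has_field_derivative_transform_within_open[of _ _ _ "{..<0}"])
      (use assms in \<open>auto simp: flat_exp_def\<close>)
  then show ?thesis
    using assms by (simp add: flat_exp_def)
qed

text \<open>At \<open>0\<close> the right difference quotient is \<open>x P(x) e\<^sup>-\<^sup>x\<close> with \<open>x = 1/s \<rightarrow> \<infinity>\<close>.\<close>

lemma flat_exp_DERIV_0: "(flat_exp P has_real_derivative flat_exp (flat_exp_deriv_poly P) 0) (at 0)"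
proof -
  let ?q = "\<lambda>y. (flat_exp P y - flat_exp P 0) / (y - 0)"
  have "(?q \<longlongrightarrow> 0) (at 0)"
  proof (rule filterlim_split_at)
    have "\<forall>\<^sub>F y in at_left (0::real). 0 = ?q y"
      by (auto simp: flat_exp_def eventually_at_left_field intro!: exI[of _ "-1"])
    then show "(?q \<longlongrightarrow> 0) (at_left 0)"
      by (rule Lim_transform_eventually[OF tendsto_const])
  next
    have "\<forall>\<^sub>F x in at_top. poly (pCons 0 P) x * exp (- x) = ?q (inverse x)"
      using eventually_gt_at_top[of 0] by eventually_elim (simp add: flat_exp_def field_simps)
    with poly_times_exp_neg_tendsto_0 have "((\<lambda>x. ?q (inverse x)) \<longlongrightarrow> 0) at_top"
      by (rule Lim_transform_eventually)
    then show "(?q \<longlongrightarrow> 0) (at_right 0)"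
      unfolding filterlim_at_right_to_top .
  qed
  then show ?thesis
    unfolding has_field_derivative_iff by (simp add: flat_exp_def)
qed

lemma flat_exp_DERIV: "(flat_exp P has_real_derivative flat_exp (flat_exp_deriv_poly P) s) (at s)"
  using flat_exp_DERIV_pos flat_exp_DERIV_neg flat_exp_DERIV_0 by (cases s "0::real" rule: linorder_cases) auto

lemma smooth1_flat_exp: "smooth1 (flat_exp P)"
proof -
  have "differentiable_upto n (flat_exp P)" for n
  proof (induction n arbitrary: P)
    case (Suc n)
    show ?case
      by (rule differentiable_uptoI[where g = "flat_exp (flat_exp_deriv_poly P)"])
        (simp_all add: flat_exp_DERIV Suc.IH)
  qed simp
  then show ?thesis
    unfolding smooth1_iff_differentiable_upto by blast
qed

definition bump :: "real \<Rightarrow> real \<Rightarrow> real \<Rightarrow> real" where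
  "bump a b s = flat_exp 1 (s - a) * flat_exp 1 (b - s)"

lemma smooth1_bump: "smooth1 (bump a b)"
proof -
  from smooth1_mult[OF smooth1_affine[OF smooth1_flat_exp, where c = 1 and a = 1 and b = "- a"]
      smooth1_affine[OF smooth1_flat_exp, where c = 1 and a = "- 1" and b = b]]
  show ?thesis
    by (simp add: bump_def[abs_def])
qed

lemma bump_eq_0: "s \<notin> {a..b} \<Longrightarrow> bump a b s = 0"
  by (auto simp: bump_def flat_exp_def)

lemma bump_nonneg: "bump a b s \<ge> 0"
  by (auto simp: bump_def flat_exp_def)

lemma bump_pos: "a < s \<Longrightarrow> s < b \<Longrightarrow> bump a b s > 0"
  by (auto simp: bump_def flat_exp_def)

section \<open>Integrals of compactly supported functions on \<open>\<real>\<close>\<close>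

lemma has_integral_set_cong:
  fixes f :: "'n::euclidean_space \<Rightarrow> 'a::banach"
  assumes "\<And>x. x \<in> (S - T) \<union> (T - S) \<Longrightarrow> f x = 0"
  shows "(f has_integral y) S \<longleftrightarrow> (f has_integral y) T"
proof -
  have empty: "{x \<in> S - T. f x \<noteq> 0} = {}" "{x \<in> T - S. f x \<noteq> 0} = {}"
    using assms by auto
  have "negligible {x \<in> S - T. f x \<noteq> 0}" "negligible {x \<in> T - S. f x \<noteq> 0}"
    by (simp_all only: empty negligible_empty)
  then show ?thesis
    by (rule has_integral_spike_set_eq)
qed

lemma integral_set_cong:
  fixes f :: "'n::euclidean_space \<Rightarrow> 'a::banach"
  assumes "\<And>x. x \<in> (S - T) \<union> (T - S) \<Longrightarrow> f x = 0"
  shows "integral S f = integral T f"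
proof -
  have iff: "(f has_integral y) S \<longleftrightarrow> (f has_integral y) T" for y
    by (rule has_integral_set_cong[OF assms])
  show ?thesis
  proof (cases "f integrable_on S")
    case True
    then show ?thesis
      using iff by (metis integrable_integral integral_unique)
  next
    case False
    then have "\<not> f integrable_on T"
      using iff unfolding integrable_on_def by blast
    with False show ?thesis
      by (simp add: not_integrable_integral)
  qed
qed

lemma has_integral_integral_Icc:
  fixes f :: "real \<Rightarrow> real"
  assumes "continuous_on {c..d} f" and "\<And>s. s \<in> (S - {c..d}) \<union> ({c..d} - S) \<Longrightarrow> f s = 0"
  shows "(f has_integral integral {c..d} f) S"
proof (rule has_integral_set_cong[OF assms(2), THEN iffD2])
  show "(f has_integral integral {c..d} f) {c..d}"
    using integrable_continuous_interval[OF assms(1)] by (simp add: has_integral_integral)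
qed

context
  fixes f :: "real \<Rightarrow> real" and a b :: real
  assumes continuous: "continuous_on UNIV f" and support: "\<And>s. s \<notin> {a..b} \<Longrightarrow> f s = 0"
begin

lemma has_integral_halfline: "c \<le> a \<Longrightarrow> c \<le> t \<Longrightarrow> (f has_integral integral {c..t} f) {..t}"
  by (rule has_integral_integral_Icc) (auto intro: continuous_on_subset[OF continuous] support)

lemma has_integral_UNIV: "c \<le> a \<Longrightarrow> b \<le> d \<Longrightarrow> (f has_integral integral {c..d} f) UNIV"
  by (rule has_integral_integral_Icc) (auto intro: continuous_on_subset[OF continuous] support)

lemma integrable_on_halfline: "f integrable_on {..t}"
  using has_integral_halfline[of "min a t" t] by auto

lemma integrable_on_UNIV: "f integrable_on UNIV"
  using has_integral_UNIV[of a "max a b"] by auto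

lemma integral_halfline_below: "t \<le> a \<Longrightarrow> integral {..t} f = 0"
  using has_integral_halfline[of t t] by (simp add: integral_unique)

lemma integral_halfline_above: "b \<le> t \<Longrightarrow> integral {..t} f = integral UNIV f"
  using has_integral_halfline[of "min a t" t] has_integral_UNIV[of "min a t" t]
  by (simp add: integral_unique)

lemma DERIV_integral_halfline: "((\<lambda>t. integral {..t} f) has_real_derivative f t) (at t)"
proof -
  define c where "c = min a (t - 1)"
  have "((\<lambda>x. integral {c..x} f) has_real_derivative f t) (at t within {c..t + 1})"
    by (rule integral_has_real_derivative[OF continuous_on_subset[OF continuous]]) (auto simp: c_def)
  moreover have "at t within {c..t + 1} = at t"
    by (rule at_within_open_subset[of _ "{c<..<t + 1}"]) (auto simp: c_def)
  ultimately have "((\<lambda>x. integral {c..x} f) has_real_derivative f t) (at t)"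
    by simp
  then show ?thesis
  proof (rule has_field_derivative_transform_within_open[of _ _ _ "{c<..}"])
    show "integral {c..x} f = integral {..x} f" if "x \<in> {c<..}" for x
      using has_integral_halfline[of c x] that by (simp add: c_def integral_unique)
  qed (auto simp: c_def)
qed

lemma continuous_on_shift: "continuous_on S (\<lambda>s. f (s + c))"
  by (rule continuous_on_compose2[OF continuous]) (auto intro!: continuous_intros)

lemma shift_eq_0: "s \<notin> {a - c..b - c} \<Longrightarrow> f (s + c) = 0"
  by (rule support) auto

lemma integral_halfline_shift: "integral {..t} (\<lambda>s. f (s + c)) = integral {..t + c} f"
proof -
  define e where "e = min (a - c) t"
  have "integral {..t} (\<lambda>s. f (s + c)) = integral {e..t} (\<lambda>s. f (s + c))"
  proof (rule integral_unique, rule has_integral_integral_Icc)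
    fix s
    assume "s \<in> ({..t} - {e..t}) \<union> ({e..t} - {..t})"
    then show "f (s + c) = 0"
      by (intro shift_eq_0) (auto simp: e_def)
  qed (rule continuous_on_shift)
  also have "\<dots> = integral {e + c..t + c} f"
    using integral_shift_real_ivl[of "e + c" c "t + c" f] by simp
  also have "\<dots> = integral {..t + c} f"
    by (rule integral_unique[symmetric], rule has_integral_halfline) (auto simp: e_def)
  finally show ?thesis .
qed

lemma integral_UNIV_shift: "integral UNIV (\<lambda>s. f (s + c)) = integral UNIV f"
proof -
  have "integral UNIV (\<lambda>s. f (s + c)) = integral {a - c..b - c} (\<lambda>s. f (s + c))"
  proof (rule integral_unique, rule has_integral_integral_Icc)
    fix s
    assume "s \<in> (UNIV - {a - c..b - c}) \<union> ({a - c..b - c} - UNIV)"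
    then show "f (s + c) = 0"
      by (intro shift_eq_0) auto
  qed (rule continuous_on_shift)
  also have "\<dots> = integral {a..b} f"
    using integral_shift_real_ivl[of a c b f] by simp
  also have "\<dots> = integral UNIV f"
    using integral_unique[OF has_integral_UNIV[of a b]] by simp
  finally show ?thesis .
qed

end

lemma smooth1_integral_halfline:
  assumes "smooth1 f" and "\<And>s. s \<notin> {a..b} \<Longrightarrow> f s = 0"
  shows "smooth1 (\<lambda>t. integral {..t} f)"
proof -
  have "differentiable_upto (Suc n) (\<lambda>t. integral {..t} f)" for n
  proof (rule differentiable_uptoI)
    show "((\<lambda>t. integral {..t} f) has_real_derivative f x) (at x)" for x
      by (rule DERIV_integral_halfline[OF smooth1_continuous_on[OF assms(1)] assms(2)])
    show "differentiable_upto n f"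
      using assms(1) smooth1_iff_differentiable_upto by blast
  qed
  then show ?thesis
    unfolding smooth1_iff_differentiable_upto by (meson differentiable_upto_SucD)
qed

lemma integral_bump_pos:
  assumes "a < b"
  shows "integral UNIV (bump a b) > 0"
proof -
  have cont: "continuous_on S (bump a b)" for S
    by (rule smooth1_continuous_on[OF smooth1_bump])
  have int: "(bump a b has_integral integral {a..b} (bump a b)) {a..b}"
    using integrable_continuous_interval[OF cont] by auto
  have "integral {a..b} (bump a b) \<noteq> 0"
  proof
    assume "integral {a..b} (bump a b) = 0"
    then have "bump a b ((a + b) / 2) = 0"
      using int assms cont bump_nonneg by (intro has_integral_0_cbox_imp_0[of a b "bump a b"]) auto
    with bump_pos[of a "(a + b) / 2" b] assms show False
      by simp
  qed
  moreover have "integral {a..b} (bump a b) \<ge> 0"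
    using has_integral_nonneg[OF int bump_nonneg] .
  moreover have "integral UNIV (bump a b) = integral {a..b} (bump a b)"
    using has_integral_UNIV[OF cont bump_eq_0, of a b] by (simp add: integral_unique)
  ultimately show ?thesis
    by simp
qed

lemma smooth1_probability_density_exists:
  assumes "a < b"
  obtains \<psi> where "smooth1 \<psi>" "\<And>s. s \<notin> {a..b} \<Longrightarrow> \<psi> s = 0" "(\<psi> has_integral 1) UNIV"
proof
  define c where "c = integral UNIV (bump a b)"
  have "c > 0"
    unfolding c_def using integral_bump_pos[OF assms] .
  have "smooth1 (\<lambda>s. (1 / c) * bump a b (1 * s + 0))"
    by (rule smooth1_affine[OF smooth1_bump])
  then show "smooth1 (\<lambda>s. bump a b s / c)"
    by simp
  show "bump a b s / c = 0" if "s \<notin> {a..b}" for s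
    using that bump_eq_0 by simp
  have "(bump a b has_integral c) UNIV"
    unfolding c_def using integrable_on_UNIV[OF smooth1_continuous_on[OF smooth1_bump] bump_eq_0]
    by auto
  from has_integral_mult_right[OF this, of "1 / c"] \<open>c > 0\<close>
  show "((\<lambda>s. bump a b s / c) has_integral 1) UNIV"
    by (simp add: divide_inverse mult.commute)
qed

definition smooth_step :: "real \<Rightarrow> real \<Rightarrow> real \<Rightarrow> real" where
  "smooth_step a b s = 1 - integral {..s} (bump a b) / integral UNIV (bump a b)"

lemma smooth1_smooth_step: "smooth1 (smooth_step a b)"
proof -
  have "smooth1 (\<lambda>t. integral {..t} (bump a b))"
    by (rule smooth1_integral_halfline[OF smooth1_bump bump_eq_0])
  from smooth1_add[OF smooth1_const smooth1_affine[OF this, of "- 1 / integral UNIV (bump a b)" 1 0]]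
  show ?thesis
    by (simp add: smooth_step_def[abs_def] divide_inverse algebra_simps)
qed

lemma smooth_step_below: "s \<le> a \<Longrightarrow> smooth_step a b s = 1"
  unfolding smooth_step_def
  using integral_halfline_below[OF smooth1_continuous_on[OF smooth1_bump] bump_eq_0] by simp

lemma smooth_step_above: "a < b \<Longrightarrow> b \<le> s \<Longrightarrow> smooth_step a b s = 0"
  unfolding smooth_step_def
  using integral_halfline_above[OF smooth1_continuous_on[OF smooth1_bump] bump_eq_0]
    integral_bump_pos[of a b]
  by simp

section \<open>Cutoff functions on \<open>\<real>^n\<close>\<close>

lemma pderivs_eq_0_on_open:
  fixes f :: "real^'n::finite \<Rightarrow> real"
  assumes "open S" and "\<And>y. y \<in> S \<Longrightarrow> f y = 0" and "x \<in> S"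
  shows "pderivs xs f x = 0"
  using assms(3)
proof (induction xs arbitrary: x)
  case (Cons i xs)
  let ?S = "(\<lambda>t. x + t *\<^sub>R axis i 1) -` S"
  have "((\<lambda>t. 0) has_real_derivative 0) (at 0)"
    by simp
  then have "((\<lambda>t. pderivs xs f (x + t *\<^sub>R axis i 1)) has_real_derivative 0) (at 0)"
  proof (rule has_field_derivative_transform_within_open)
    show "open ?S"
      by (rule continuous_open_vimage[OF assms(1)]) (intro continuous_intros)
    show "0 \<in> ?S"
      using Cons.prems by simp
    show "0 = pderivs xs f (x + t *\<^sub>R axis i 1)" if "t \<in> ?S" for t
      using Cons.IH that by simp
  qed
  then show ?case
    by (simp add: pderivs.simps(2) DERIV_imp_deriv)
qed (use assms(2) in simp)

lemma pderivs_eq_0_outside_support: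
  fixes f :: "real^'n::finite \<Rightarrow> real"
  assumes "x \<notin> closure {y. f y \<noteq> 0}"
  shows "pderivs xs f x = 0"
proof (rule pderivs_eq_0_on_open[of "- closure {y. f y \<noteq> 0}"])
  show "f y = 0" if "y \<in> - closure {y. f y \<noteq> 0}" for y
    using that closure_subset[of "{y. f y \<noteq> 0}"] by auto
qed (use assms in auto)

lemma support_pderivs_subset:
  fixes f :: "real^'n::finite \<Rightarrow> real"
  shows "closure {y. pderivs [i] f y \<noteq> 0} \<subseteq> closure {y. f y \<noteq> 0}"
proof (rule closure_minimal)
  show "{y. pderivs [i] f y \<noteq> 0} \<subseteq> closure {y. f y \<noteq> 0}"
    using pderivs_eq_0_outside_support[of _ f "[i]"] by blast
qed simp

lemma test_fun_on_pderivs: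
  assumes "test_fun_on U \<phi>"
  shows "test_fun_on U (pderivs [i] \<phi>)"
proof -
  have sub: "closure {x. pderivs [i] \<phi> x \<noteq> 0} \<subseteq> closure {x. \<phi> x \<noteq> 0}"
    by (rule support_pderivs_subset)
  have "compact (closure {x. pderivs [i] \<phi> x \<noteq> 0})"
    using assms compact_Int_closed[of "closure {x. \<phi> x \<noteq> 0}" "closure {x. pderivs [i] \<phi> x \<noteq> 0}"] sub
    unfolding test_fun_on_def by (simp add: Int_absorb1)
  with assms sub show ?thesis
    unfolding test_fun_on_def using smooth_pderivs by blast
qed

definition cutoff :: "real^'n::finite \<Rightarrow> real \<Rightarrow> real^'n \<Rightarrow> real" where
  "cutoff p r x = smooth_step (r\<^sup>2) (4 * r\<^sup>2) ((dist x p)\<^sup>2)"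

lemma smooth_cutoff: "smooth (cutoff p r)"
  unfolding cutoff_def[abs_def] by (rule smooth_comp_smooth1[OF smooth_dist_sq smooth1_smooth_step])

lemma cutoff_eq_1: "r > 0 \<Longrightarrow> dist x p \<le> r \<Longrightarrow> cutoff p r x = 1"
  unfolding cutoff_def by (rule smooth_step_below) (simp add: power_mono)

lemma cutoff_eq_0:
  assumes "r > 0" and "2 * r \<le> dist x p"
  shows "cutoff p r x = 0"
proof -
  have "(2 * r)\<^sup>2 \<le> (dist x p)\<^sup>2"
    using assms by (intro power_mono) auto
  then show ?thesis
    unfolding cutoff_def using assms(1) by (intro smooth_step_above) (auto simp: power2_eq_square)
qed

lemma test_fun_on_mult_cutoff:
  assumes "smooth g" and "r > 0" and "cball p (2 * r) \<subseteq> V"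
  shows "test_fun_on V (\<lambda>x. g x * cutoff p r x)"
proof -
  have supp: "{x. g x * cutoff p r x \<noteq> 0} \<subseteq> cball p (2 * r)"
    using cutoff_eq_0[OF assms(2)] by (force simp: dist_commute)
  then have "closure {x. g x * cutoff p r x \<noteq> 0} \<subseteq> cball p (2 * r)"
    by (rule closure_minimal) simp
  with supp assms show ?thesis
    unfolding test_fun_on_def compact_closure
    using bounded_cball bounded_subset smooth_mult[OF assms(1) smooth_cutoff] by blast
qed

section \<open>Compactly supported distributions\<close>

lemma compact_distr_add:
  "compact_distr w \<Longrightarrow> smooth f \<Longrightarrow> smooth g \<Longrightarrow> w (\<lambda>x. f x + g x) = w f + w g"
  unfolding compact_distr_def by blast

lemma compact_distr_cmult: "compact_distr w \<Longrightarrow> smooth f \<Longrightarrow> w (\<lambda>x. c * f x) = c *\<^sub>R w f"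
  unfolding compact_distr_def by blast

lemma compact_distr_diff:
  assumes "compact_distr w" and "smooth f" and "smooth g"
  shows "w (\<lambda>x. f x - g x) = w f - w g"
proof -
  have "w (\<lambda>x. f x + (-1) * g x) = w f + w (\<lambda>x. (-1) * g x)"
    by (rule compact_distr_add[OF assms(1,2) smooth_cmult[OF assms(3)]])
  also have "w (\<lambda>x. (-1) * g x) = (-1) *\<^sub>R w g"
    by (rule compact_distr_cmult[OF assms(1,3)])
  finally show ?thesis
    by simp
qed

lemma compact_distr_eq_0_if_flat:
  assumes "compact_distr w"
  obtains K where "compact K"
    and "\<And>f. smooth f \<Longrightarrow> (\<And>xs x. x \<in> K \<Longrightarrow> pderivs xs f x = 0) \<Longrightarrow> w f = 0"
proof -
  obtain K N C where K: "compact K"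
    and bound: "\<And>\<phi> M. smooth \<phi> \<Longrightarrow> (\<forall>xs x. length xs \<le> N \<longrightarrow> x \<in> K \<longrightarrow> \<bar>pderivs xs \<phi> x\<bar> \<le> M) \<Longrightarrow>
      norm (w \<phi>) \<le> C * M"
    using assms unfolding compact_distr_def by metis
  have "w f = 0" if "smooth f" and "\<And>xs x. x \<in> K \<Longrightarrow> pderivs xs f x = 0" for f
    using bound[OF that(1), of 0] that(2) by simp
  with K show ?thesis
    by (rule that)
qed

lemma compact_distr_minus:
  assumes w1: "compact_distr w1" and w2: "compact_distr w2"
  shows "compact_distr (\<lambda>\<phi>. w1 \<phi> - w2 \<phi>)"
proof -
  obtain K1 N1 C1 where K1: "compact K1" and bound1: "\<And>\<phi> M. smooth \<phi> \<Longrightarrow>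
      (\<forall>xs x. length xs \<le> N1 \<longrightarrow> x \<in> K1 \<longrightarrow> \<bar>pderivs xs \<phi> x\<bar> \<le> M) \<Longrightarrow> norm (w1 \<phi>) \<le> C1 * M"
    using w1 unfolding compact_distr_def by metis
  obtain K2 N2 C2 where K2: "compact K2" and bound2: "\<And>\<phi> M. smooth \<phi> \<Longrightarrow>
      (\<forall>xs x. length xs \<le> N2 \<longrightarrow> x \<in> K2 \<longrightarrow> \<bar>pderivs xs \<phi> x\<bar> \<le> M) \<Longrightarrow> norm (w2 \<phi>) \<le> C2 * M"
    using w2 unfolding compact_distr_def by metis
  have "norm (w1 \<phi> - w2 \<phi>) \<le> (C1 + C2) * M"
    if "smooth \<phi>" and "\<forall>xs x. length xs \<le> max N1 N2 \<longrightarrow> x \<in> K1 \<union> K2 \<longrightarrow> \<bar>pderivs xs \<phi> x\<bar> \<le> M"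
    for \<phi> M
  proof -
    have "norm (w1 \<phi>) \<le> C1 * M" "norm (w2 \<phi>) \<le> C2 * M"
      using bound1[OF that(1)] bound2[OF that(1)] that(2) by simp_all
    then show ?thesis
      using norm_triangle_ineq4[of "w1 \<phi>" "w2 \<phi>"] by (simp add: distrib_right)
  qed
  with compact_Un[OF K1 K2] have "\<exists>K C N. compact K \<and> (\<forall>\<phi> M. smooth \<phi> \<longrightarrow>
      (\<forall>xs x. length xs \<le> N \<longrightarrow> x \<in> K \<longrightarrow> \<bar>pderivs xs \<phi> x\<bar> \<le> M) \<longrightarrow>
      norm (w1 \<phi> - w2 \<phi>) \<le> C * M)"
    by blast
  then show ?thesis
    using compact_distr_add[OF w1] compact_distr_add[OF w2]
      compact_distr_cmult[OF w1] compact_distr_cmult[OF w2]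
    unfolding compact_distr_def by (simp add: algebra_simps)
qed

lemma notin_dsupp_iff: "x \<notin> dsupp w \<longleftrightarrow> (\<exists>V. open V \<and> distr_eq_on V w (\<lambda>_. 0) \<and> x \<in> V)"
  unfolding dsupp_def by blast

lemma notin_dsuppE:
  assumes "x \<notin> dsupp w"
  obtains V where "open V" and "distr_eq_on V w (\<lambda>_. 0)" and "x \<in> V"
  using assms unfolding notin_dsupp_iff by blast

lemma bounded_dsupp:
  assumes "compact_distr w"
  shows "bounded (dsupp w)"
proof -
  obtain K where K: "compact K"
    and flat: "\<And>f. smooth f \<Longrightarrow> (\<And>xs x. x \<in> K \<Longrightarrow> pderivs xs f x = 0) \<Longrightarrow> w f = 0"
    using compact_distr_eq_0_if_flat[OF assms] by blast
  have "distr_eq_on (- K) w (\<lambda>_. 0)"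
    unfolding distr_eq_on_def
  proof (intro allI impI)
    fix \<phi>
    assume \<phi>: "test_fun_on (- K) \<phi>"
    show "w \<phi> = 0"
    proof (rule flat)
      show "smooth \<phi>"
        using \<phi> unfolding test_fun_on_def by blast
      show "pderivs xs \<phi> x = 0" if "x \<in> K" for xs x
        using \<phi> that unfolding test_fun_on_def by (blast intro: pderivs_eq_0_outside_support)
    qed
  qed
  moreover have "open (- K)"
    using K compact_imp_closed by blast
  ultimately have "dsupp w \<subseteq> K"
    unfolding dsupp_def by blast
  with K show ?thesis
    using compact_imp_bounded bounded_subset by blast
qed

lemma dsupp_minus_subset:
  assumes "open U" and "distr_eq_on U w1 w2"
  shows "dsupp (\<lambda>\<phi>. w1 \<phi> - w2 \<phi>) \<subseteq> (dsupp w1 \<union> dsupp w2) - U"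
proof -
  have "distr_eq_on U (\<lambda>\<phi>. w1 \<phi> - w2 \<phi>) (\<lambda>_. 0)"
    using assms(2) unfolding distr_eq_on_def by simp
  then have "x \<notin> dsupp (\<lambda>\<phi>. w1 \<phi> - w2 \<phi>)" if "x \<in> U" for x
    using assms(1) that unfolding notin_dsupp_iff by (intro exI[of _ U]) simp
  moreover have "x \<notin> dsupp (\<lambda>\<phi>. w1 \<phi> - w2 \<phi>)" if x1: "x \<notin> dsupp w1" and x2: "x \<notin> dsupp w2" for x
  proof -
    obtain V1 where V1: "open V1" "distr_eq_on V1 w1 (\<lambda>_. 0)" "x \<in> V1"
      by (rule notin_dsuppE[OF x1])
    obtain V2 where V2: "open V2" "distr_eq_on V2 w2 (\<lambda>_. 0)" "x \<in> V2"
      by (rule notin_dsuppE[OF x2])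
    have "distr_eq_on (V1 \<inter> V2) (\<lambda>\<phi>. w1 \<phi> - w2 \<phi>) (\<lambda>_. 0)"
      unfolding distr_eq_on_def
    proof (intro allI impI)
      fix \<phi>
      assume "test_fun_on (V1 \<inter> V2) \<phi>"
      then have "test_fun_on V1 \<phi>" and "test_fun_on V2 \<phi>"
        unfolding test_fun_on_def by (meson le_inf_iff)+
      with V1(2) V2(2) show "w1 \<phi> - w2 \<phi> = 0"
        unfolding distr_eq_on_def by simp
    qed
    then show ?thesis
      unfolding notin_dsupp_iff using V1(1,3) V2(1,3) by (intro exI[of _ "V1 \<inter> V2"]) (simp add: open_Int)
  qed
  ultimately show ?thesis
    by (meson Diff_iff UnCI subsetI)
qed

lemma notin_dsupp_cutoff:
  assumes "p \<notin> dsupp w"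
  obtains r where "r > 0" and "\<And>g. smooth g \<Longrightarrow> w (\<lambda>x. g x * cutoff p r x) = 0"
proof -
  obtain V where V: "open V" "distr_eq_on V w (\<lambda>_. 0)" "p \<in> V"
    using assms unfolding notin_dsupp_iff by blast
  then obtain e where "e > 0" "ball p e \<subseteq> V"
    using open_contains_ball by blast
  then have sub: "cball p (2 * (e / 3)) \<subseteq> V"
    by (auto simp: subset_iff)
  show ?thesis
  proof (rule that[of "e / 3"])
    show "e / 3 > 0"
      using \<open>e > 0\<close> by simp
    show "w (\<lambda>x. g x * cutoff p (e / 3) x) = 0" if g: "smooth g" for g
      using V(2) test_fun_on_mult_cutoff[OF g _ sub] \<open>e > 0\<close> unfolding distr_eq_on_def by simp
  qed
qed

lemma compact_distr_mult_prod_cutoffs: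
  assumes w: "compact_distr w" and f: "smooth f" and "finite T"
    and vanish: "\<And>q g. q \<in> T \<Longrightarrow> smooth g \<Longrightarrow> w (\<lambda>x. g x * cutoff q (R q) x) = 0"
  shows "w (\<lambda>x. f x * (\<Prod>q\<in>T. 1 - cutoff q (R q) x)) = w f"
  using \<open>finite T\<close> vanish
proof (induction T rule: finite_induct)
  case (insert q T)
  define h where "h x = f x * (\<Prod>q\<in>T. 1 - cutoff q (R q) x)" for x
  have h: "smooth h"
    unfolding h_def[abs_def] using insert.hyps(1)
    by (intro smooth_mult[OF f] smooth_prod smooth_diff smooth_const smooth_cutoff)
  have "w (\<lambda>x. f x * (\<Prod>q\<in>insert q T. 1 - cutoff q (R q) x)) =
      w (\<lambda>x. h x - h x * cutoff q (R q) x)"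
    using insert.hyps by (simp add: h_def algebra_simps)
  also have "\<dots> = w h"
    using compact_distr_diff[OF w h smooth_mult[OF h smooth_cutoff]] insert.prems[of q h] h by simp
  also have "\<dots> = w f"
    unfolding h_def using insert by blast
  finally show ?case .
qed simp

text \<open>The part outside \<open>W\<close> of the compact set in the seminorm estimate for \<open>w\<close> is covered by
  finitely many balls on which \<open>w\<close> vanishes; multiplying by the complementary cutoffs kills \<open>f\<close>
  near that compact set without changing \<open>w f\<close>.\<close>

lemma compact_distr_eq_0_near_dsupp:
  assumes w: "compact_distr w" and f: "smooth f" and "open W" and "dsupp w \<subseteq> W"
    and f0: "\<And>x. x \<in> W \<Longrightarrow> f x = 0"
  shows "w f = 0"
proof -
  obtain K where "compact K"
    and flat: "\<And>f. smooth f \<Longrightarrow> (\<And>xs x. x \<in> K \<Longrightarrow> pderivs xs f x = 0) \<Longrightarrow> w f = 0"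
    using compact_distr_eq_0_if_flat[OF w] by blast
  have "\<forall>p\<in>K - W. \<exists>r>0. \<forall>g. smooth g \<longrightarrow> w (\<lambda>x. g x * cutoff p r x) = 0"
    using notin_dsupp_cutoff \<open>dsupp w \<subseteq> W\<close> by (metis Diff_iff subsetD)
  then obtain R where R: "\<And>p. p \<in> K - W \<Longrightarrow> R p > 0"
    and vanish: "\<And>p g. p \<in> K - W \<Longrightarrow> smooth g \<Longrightarrow> w (\<lambda>x. g x * cutoff p (R p) x) = 0"
    by metis
  have "compact (K - W)"
    using \<open>compact K\<close> \<open>open W\<close> by (rule compact_diff)
  moreover have "K - W \<subseteq> (\<Union>p\<in>K - W. ball p (R p))"
    using R by force
  ultimately obtain T where T: "T \<subseteq> K - W" "finite T" "K - W \<subseteq> (\<Union>p\<in>T. ball p (R p))"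
    using compactE_image[of "K - W" "K - W" "\<lambda>p. ball p (R p)"] by blast
  define g where "g x = f x * (\<Prod>q\<in>T. 1 - cutoff q (R q) x)" for x
  have g: "smooth g"
    unfolding g_def[abs_def] using T(2)
    by (intro smooth_mult[OF f] smooth_prod smooth_diff smooth_const smooth_cutoff)
  have "g y = 0" if y: "y \<in> W \<union> (\<Union>p\<in>T. ball p (R p))" for y
  proof (cases "y \<in> W")
    case False
    then obtain q where q: "q \<in> T" "y \<in> ball q (R q)"
      using y by blast
    with R T(1) have "cutoff q (R q) y = 1"
      by (intro cutoff_eq_1) (auto simp: dist_commute)
    with q T(2) show ?thesis
      unfolding g_def by (auto simp: prod_zero_iff)
  qed (simp add: g_def f0)
  then have "pderivs xs g x = 0" if "x \<in> K" for xs x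
    using that T(3) \<open>open W\<close> by (intro pderivs_eq_0_on_open[of "W \<union> (\<Union>p\<in>T. ball p (R p))"]) auto
  then have "w g = 0"
    by (rule flat[OF g])
  moreover have "w g = w f"
    unfolding g_def using T vanish by (intro compact_distr_mult_prod_cutoffs[OF w f]) auto
  ultimately show ?thesis
    by simp
qed

section \<open>Integrals along lines\<close>

definition line_integral :: "real set \<Rightarrow> real^'n::finite \<Rightarrow> (real^'n \<Rightarrow> real) \<Rightarrow> real^'n \<Rightarrow> real" where
  "line_integral I v \<phi> x = integral I (\<lambda>r. \<phi> (x + r *\<^sub>R v))"

text \<open>Covers both \<open>{..c}\<close> and \<open>UNIV\<close>, the two domains of integration in
  \<open>fun_antideriv\<close>.\<close>

definition halfline_like :: "real set \<Rightarrow> bool" where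
  "halfline_like I \<longleftrightarrow> (\<forall>R. \<exists>h. \<forall>r. \<bar>r\<bar> \<le> R \<longrightarrow> (r \<in> I \<longleftrightarrow> r \<le> h))"

lemma halfline_like_atMost: "halfline_like {..c}"
  unfolding halfline_like_def by auto

lemma halfline_like_UNIV: "halfline_like UNIV"
proof (unfold halfline_like_def, intro allI)
  fix R :: real
  show "\<exists>h. \<forall>r. \<bar>r\<bar> \<le> R \<longrightarrow> r \<in> UNIV \<longleftrightarrow> r \<le> h"
    by (rule exI[of _ R]) auto
qed

lemma test_fun_on_support_bound:
  assumes "test_fun_on U \<phi>"
  obtains B where "\<And>y. y \<in> closure {x. \<phi> x \<noteq> 0} \<Longrightarrow> norm y \<le> B"
proof -
  have "bounded (closure {x. \<phi> x \<noteq> 0})"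
    using assms compact_imp_bounded unfolding test_fun_on_def by blast
  then show ?thesis
    unfolding bounded_iff using that by blast
qed

lemma line_eq_0_far:
  fixes x v :: "'a::real_normed_vector"
  assumes "norm v = 1" and "\<And>y. \<phi> y \<noteq> 0 \<Longrightarrow> norm y \<le> B" and "norm x \<le> A" and "A + B < \<bar>r\<bar>"
  shows "\<phi> (x + r *\<^sub>R v) = 0"
proof (rule ccontr)
  assume "\<phi> (x + r *\<^sub>R v) \<noteq> 0"
  then have "norm (x + r *\<^sub>R v) \<le> B"
    by (rule assms(2))
  moreover have "\<bar>r\<bar> \<le> norm (x + r *\<^sub>R v) + norm x"
    using norm_triangle_ineq4[of "x + r *\<^sub>R v" x] assms(1) by simp
  ultimately show False
    using assms(3,4) by linarith
qed

lemma test_fun_on_line_eq_0: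
  fixes v :: "real^'n::finite"
  assumes "norm v = 1" and "test_fun_on UNIV \<phi>"
  obtains R where "\<And>r. r \<notin> {-R..R} \<Longrightarrow> \<phi> (x + r *\<^sub>R v) = 0"
proof -
  obtain B where B: "\<And>y. y \<in> closure {x. \<phi> x \<noteq> 0} \<Longrightarrow> norm y \<le> B"
    using test_fun_on_support_bound[OF assms(2)] by blast
  have "\<phi> (x + r *\<^sub>R v) = 0" if r: "r \<notin> {-(norm x + B)..norm x + B}" for r
  proof (rule line_eq_0_far[OF assms(1) _ order_refl])
    show "norm y \<le> B" if "\<phi> y \<noteq> 0" for y
      using B that closure_subset[of "{x. \<phi> x \<noteq> 0}"] by blast
    show "norm x + B < \<bar>r\<bar>"
      using r by auto
  qed
  then show ?thesis
    by (rule that)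
qed

lemma line_integral_eq_Icc:
  fixes v :: "real^'n::finite"
  assumes "norm v = 1" and "continuous_on UNIV \<phi>" and "\<And>y. \<phi> y \<noteq> 0 \<Longrightarrow> norm y \<le> B"
    and "\<And>r. \<bar>r\<bar> \<le> A + B \<Longrightarrow> r \<in> I \<longleftrightarrow> r \<le> h" and "norm x \<le> A"
  shows "line_integral I v \<phi> x = integral {-(A + B)..h} (\<lambda>r. \<phi> (x + r *\<^sub>R v))"
  unfolding line_integral_def
proof (rule integral_unique, rule has_integral_integral_Icc)
  show "continuous_on {-(A + B)..h} (\<lambda>r. \<phi> (x + r *\<^sub>R v))"
    by (rule continuous_on_compose2[OF assms(2)]) (auto intro!: continuous_intros)
  fix r
  assume "r \<in> (I - {-(A + B)..h}) \<union> ({-(A + B)..h} - I)"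
  then have "A + B < \<bar>r\<bar>"
    using assms(4)[of r] by (cases "\<bar>r\<bar> \<le> A + B") auto
  then show "\<phi> (x + r *\<^sub>R v) = 0"
    using line_eq_0_far[OF assms(1,3,5)] by blast
qed

lemma line_integral_local_Icc:
  fixes v :: "real^'n::finite"
  assumes "norm v = 1" and "halfline_like I" and "test_fun_on UNIV \<phi>"
  obtains a b where "\<And>\<psi> x. continuous_on UNIV \<psi> \<Longrightarrow> closure {y. \<psi> y \<noteq> 0} \<subseteq> closure {y. \<phi> y \<noteq> 0} \<Longrightarrow>
      norm x \<le> norm p + 1 \<Longrightarrow> line_integral I v \<psi> x = integral {a..b} (\<lambda>r. \<psi> (x + r *\<^sub>R v))"
proof -
  obtain B where B: "\<And>y. y \<in> closure {x. \<phi> x \<noteq> 0} \<Longrightarrow> norm y \<le> B"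
    using test_fun_on_support_bound[OF assms(3)] by blast
  obtain h where h: "\<And>r. \<bar>r\<bar> \<le> (norm p + 1) + B \<Longrightarrow> r \<in> I \<longleftrightarrow> r \<le> h"
    using assms(2) unfolding halfline_like_def by blast
  have "line_integral I v \<psi> x = integral {-((norm p + 1) + B)..h} (\<lambda>r. \<psi> (x + r *\<^sub>R v))"
    if "continuous_on UNIV \<psi>" and sub: "closure {y. \<psi> y \<noteq> 0} \<subseteq> closure {y. \<phi> y \<noteq> 0}"
      and "norm x \<le> norm p + 1" for \<psi> x
  proof (rule line_integral_eq_Icc[OF assms(1) that(1) _ h that(3)])
    show "norm y \<le> B" if "\<psi> y \<noteq> 0" for y
      using B sub closure_subset[of "{y. \<psi> y \<noteq> 0}"] that by blast
  qed
  then show ?thesis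
    by (rule that)
qed

lemma continuous_on_line_param:
  fixes \<phi> :: "'a::real_normed_vector \<Rightarrow> 'b::topological_space"
  assumes "continuous_on UNIV \<phi>"
  shows "continuous_on S (\<lambda>(x, r). \<phi> (x + r *\<^sub>R v))"
proof -
  have "continuous_on S (\<lambda>p. \<phi> (fst p + snd p *\<^sub>R v))"
    by (rule continuous_on_compose2[OF assms]) (auto intro!: continuous_intros)
  then show ?thesis
    by (simp add: case_prod_beta)
qed

lemma continuous_on_plane_param:
  fixes \<phi> :: "'a::real_normed_vector \<Rightarrow> 'b::topological_space"
  assumes "continuous_on UNIV \<phi>"
  shows "continuous_on S (\<lambda>(t, r). \<phi> (x + t *\<^sub>R e + r *\<^sub>R v))"
proof -
  have "continuous_on S (\<lambda>p. \<phi> (x + fst p *\<^sub>R e + snd p *\<^sub>R v))"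
    by (rule continuous_on_compose2[OF assms]) (auto intro!: continuous_intros)
  then show ?thesis
    by (simp add: case_prod_beta)
qed

lemma continuous_on_line_integral:
  fixes v :: "real^'n::finite"
  assumes v: "norm v = 1" and I: "halfline_like I" and \<phi>: "test_fun_on UNIV \<phi>"
  shows "continuous_on UNIV (line_integral I v \<phi>)"
proof -
  have \<phi>c: "continuous_on UNIV \<phi>"
    using \<phi> smooth_continuous_on unfolding test_fun_on_def by blast
  have "isCont (line_integral I v \<phi>) x0" for x0
  proof -
    obtain a b where "\<And>\<psi> x. continuous_on UNIV \<psi> \<Longrightarrow> closure {y. \<psi> y \<noteq> 0} \<subseteq> closure {y. \<phi> y \<noteq> 0} \<Longrightarrow>
        norm x \<le> norm x0 + 1 \<Longrightarrow> line_integral I v \<psi> x = integral {a..b} (\<lambda>r. \<psi> (x + r *\<^sub>R v))"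
      using line_integral_local_Icc[OF v I \<phi>, where p = x0] by blast
    from this[OF \<phi>c order_refl]
    have ab: "\<And>x. norm x \<le> norm x0 + 1 \<Longrightarrow>
        line_integral I v \<phi> x = integral (cbox a b) (\<lambda>r. \<phi> (x + r *\<^sub>R v))"
      by (simp add: cbox_interval)
    have "continuous_on (ball x0 1) (\<lambda>x. integral (cbox a b) (\<lambda>r. \<phi> (x + r *\<^sub>R v)))"
      by (intro integral_continuous_on_param continuous_on_line_param[OF \<phi>c])
    moreover have "norm x \<le> norm x0 + 1" if "x \<in> ball x0 1" for x
      using that norm_triangle_sub[of x x0] by (auto simp: dist_norm norm_minus_commute)
    ultimately have "continuous_on (ball x0 1) (line_integral I v \<phi>)"
      using ab by (auto intro: continuous_on_eq)
    then show "isCont (line_integral I v \<phi>) x0"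
      using continuous_on_eq_continuous_at[of "ball x0 1" "line_integral I v \<phi>"] by simp
  qed
  then show ?thesis
    by (simp add: continuous_at_imp_continuous_on)
qed

lemma DERIV_integral_param:
  fixes v :: "real^'n::finite"
  assumes "smooth \<phi>"
  shows "((\<lambda>t. integral (cbox a b) (\<lambda>r. \<phi> (x0 + t *\<^sub>R axis i 1 + r *\<^sub>R v))) has_real_derivative
    integral (cbox a b) (\<lambda>r. pderivs [i] \<phi> (x0 + r *\<^sub>R v))) (at 0)"
proof -
  have "((\<lambda>t. integral (cbox a b) (\<lambda>r. \<phi> (x0 + t *\<^sub>R axis i 1 + r *\<^sub>R v))) has_field_derivative
      integral (cbox a b) (\<lambda>r. pderivs [i] \<phi> (x0 + 0 *\<^sub>R axis i 1 + r *\<^sub>R v))) (at 0 within UNIV)"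
  proof (rule leibniz_rule_field_derivative)
    fix t r
    have "((\<lambda>t. \<phi> ((x0 + r *\<^sub>R v) + t *\<^sub>R axis i 1)) has_real_derivative
        pderivs [i] \<phi> ((x0 + r *\<^sub>R v) + t *\<^sub>R axis i 1)) (at t)"
      by (rule has_partials_DERIV[OF smooth_has_partials[OF assms]])
    then show "((\<lambda>t. \<phi> (x0 + t *\<^sub>R axis i 1 + r *\<^sub>R v)) has_field_derivative
        pderivs [i] \<phi> (x0 + t *\<^sub>R axis i 1 + r *\<^sub>R v)) (at t within UNIV)"
      by (simp add: ac_simps)
  next
    fix t
    show "(\<lambda>r. \<phi> (x0 + t *\<^sub>R axis i 1 + r *\<^sub>R v)) integrable_on cbox a b"
      by (intro integrable_continuous continuous_on_compose2[OF smooth_continuous_on[OF assms]])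
        (auto intro!: continuous_intros)
  next
    show "continuous_on (UNIV \<times> cbox a b) (\<lambda>(t, r). pderivs [i] \<phi> (x0 + t *\<^sub>R axis i 1 + r *\<^sub>R v))"
      by (rule continuous_on_plane_param[OF smooth_continuous_on[OF smooth_pderivs[OF assms]]])
  qed auto
  then show ?thesis
    by simp
qed

lemma DERIV_line_integral:
  fixes v :: "real^'n::finite"
  assumes v: "norm v = 1" and I: "halfline_like I" and \<phi>: "test_fun_on UNIV \<phi>"
  shows "((\<lambda>t. line_integral I v \<phi> (x0 + t *\<^sub>R axis i 1)) has_real_derivative
    line_integral I v (pderivs [i] \<phi>) x0) (at 0)"
proof -
  have sm: "smooth \<phi>"
    using \<phi> unfolding test_fun_on_def by blast
  obtain a b where "\<And>\<psi> x. continuous_on UNIV \<psi> \<Longrightarrow> closure {y. \<psi> y \<noteq> 0} \<subseteq> closure {y. \<phi> y \<noteq> 0} \<Longrightarrow>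
      norm x \<le> norm x0 + 1 \<Longrightarrow> line_integral I v \<psi> x = integral {a..b} (\<lambda>r. \<psi> (x + r *\<^sub>R v))"
    using line_integral_local_Icc[OF v I \<phi>, where p = x0] by blast
  then have ab: "\<And>\<psi> x. continuous_on UNIV \<psi> \<Longrightarrow> closure {y. \<psi> y \<noteq> 0} \<subseteq> closure {y. \<phi> y \<noteq> 0} \<Longrightarrow>
      norm x \<le> norm x0 + 1 \<Longrightarrow> line_integral I v \<psi> x = integral (cbox a b) (\<lambda>r. \<psi> (x + r *\<^sub>R v))"
    by (simp add: cbox_interval)
  have "((\<lambda>t. integral (cbox a b) (\<lambda>r. \<phi> (x0 + t *\<^sub>R axis i 1 + r *\<^sub>R v))) has_real_derivative
      line_integral I v (pderivs [i] \<phi>) x0) (at 0)"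
    using DERIV_integral_param[OF sm, of a b x0 i v]
      ab[OF smooth_continuous_on[OF smooth_pderivs[OF sm]] support_pderivs_subset, of x0]
    by simp
  then show ?thesis
  proof (rule has_field_derivative_transform_within_open[of _ _ _ "{-1<..<1}"])
    fix t :: real
    assume "t \<in> {-1<..<1}"
    then have "norm (x0 + t *\<^sub>R axis i 1) \<le> norm x0 + 1"
      using norm_triangle_ineq[of x0 "t *\<^sub>R axis i 1"] by auto
    then show "integral (cbox a b) (\<lambda>r. \<phi> (x0 + t *\<^sub>R axis i 1 + r *\<^sub>R v)) =
        line_integral I v \<phi> (x0 + t *\<^sub>R axis i 1)"
      using ab[OF smooth_continuous_on[OF sm] order_refl] by simp
  qed auto
qed

lemma smooth_line_integral:
  fixes v :: "real^'n::finite"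
  assumes v: "norm v = 1" and I: "halfline_like I"
  shows "test_fun_on UNIV \<phi> \<Longrightarrow> smooth (line_integral I v \<phi>)"
proof -
  have "\<forall>\<phi>. test_fun_on UNIV \<phi> \<longrightarrow> smooth_upto n (line_integral I v \<phi>)" for n
  proof (induction n)
    case (Suc n)
    show ?case
    proof (intro allI impI)
      fix \<phi> :: "real^'n \<Rightarrow> real"
      assume \<phi>: "test_fun_on UNIV \<phi>"
      have "smooth_upto n (line_integral I v (pderivs [j] \<phi>))" for j
        using Suc.IH test_fun_on_pderivs[OF \<phi>] by blast
      then show "smooth_upto (Suc n) (line_integral I v \<phi>)"
        using has_partialsI[OF continuous_on_line_integral[OF v I \<phi>] DERIV_line_integral[OF v I \<phi>]]
        by simp
    qed
  qed simp
  then show "test_fun_on UNIV \<phi> \<Longrightarrow> smooth (line_integral I v \<phi>)"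
    unfolding smooth_iff_smooth_upto by blast
qed

section \<open>The directional antiderivative of a test function\<close>

lemma fun_antideriv_eq:
  fixes v :: "real^'n::finite"
  assumes v: "norm v = 1" and \<phi>: "test_fun_on UNIV \<phi>"
    and \<psi>: "continuous_on UNIV \<psi>" "\<And>s. s \<notin> {a..b} \<Longrightarrow> \<psi> s = 0"
  shows "fun_antideriv v \<psi> \<phi> x =
    line_integral {..0} v \<phi> x - line_integral UNIV v \<phi> x * integral {..x \<bullet> v} \<psi>"
proof -
  define t where "t = x \<bullet> v"
  define g where "g r = \<phi> (x + r *\<^sub>R v)" for r
  obtain R where g_supp: "\<And>r. r \<notin> {-R..R} \<Longrightarrow> g r = 0"
    unfolding g_def using test_fun_on_line_eq_0[OF v \<phi>] by blast
  have "continuous_on UNIV \<phi>"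
    using \<phi> smooth_continuous_on unfolding test_fun_on_def by blast
  then have g_cont: "continuous_on UNIV g"
    unfolding g_def[abs_def] by (rule continuous_on_compose2) (auto intro!: continuous_intros)
  have line: "\<phi> (x - t *\<^sub>R v + s *\<^sub>R v) = g (s - t)" for s
    by (simp add: g_def algebra_simps)
  have shift_UNIV: "integral UNIV (\<lambda>s. g (s - t)) = integral UNIV g"
    using integral_UNIV_shift[OF g_cont g_supp, where c = "- t"] by simp
  have shift_halfline: "integral {..t} (\<lambda>s. g (s - t)) = integral {..0} g"
    using integral_halfline_shift[OF g_cont g_supp, where t = t and c = "- t"] by simp
  have "(\<lambda>s. g (s - t)) integrable_on {..t}"
    using integrable_on_halfline[OF continuous_on_shift[OF g_cont g_supp, where c = "- t"]
        shift_eq_0[OF g_cont g_supp, where c = "- t"], where t = t]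
    by simp
  moreover have "(\<lambda>s. integral UNIV g * \<psi> s) integrable_on {..t}"
    using integrable_on_cmult_left[OF integrable_on_halfline[OF \<psi>]] by simp
  ultimately have "integral {..t} (\<lambda>s. g (s - t) - integral UNIV g * \<psi> s) =
      integral {..0} g - integral UNIV g * integral {..t} \<psi>"
    by (simp add: integral_diff shift_halfline)
  moreover have "fun_antideriv v \<psi> \<phi> x = integral {..t} (\<lambda>s. g (s - t) - integral UNIV g * \<psi> s)"
    unfolding fun_antideriv_def xray_def Let_def t_def[symmetric] line shift_UNIV ..
  ultimately show ?thesis
    unfolding line_integral_def g_def t_def by simp
qed

lemma smooth_fun_antideriv:
  fixes v :: "real^'n::finite"
  assumes v: "norm v = 1" and \<phi>: "test_fun_on UNIV \<phi>"
    and \<psi>: "smooth1 \<psi>" "\<And>s. s \<notin> {a..b} \<Longrightarrow> \<psi> s = 0"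
  shows "smooth (fun_antideriv v \<psi> \<phi>)"
proof -
  have "smooth (\<lambda>x. line_integral {..0} v \<phi> x - line_integral UNIV v \<phi> x * integral {..x \<bullet> v} \<psi>)"
  proof (intro smooth_diff smooth_mult)
    show "smooth (line_integral {..0} v \<phi>)" "smooth (line_integral UNIV v \<phi>)"
      by (intro smooth_line_integral[OF v halfline_like_atMost \<phi>] smooth_line_integral[OF v halfline_like_UNIV \<phi>])+
    show "smooth (\<lambda>x. integral {..x \<bullet> v} \<psi>)"
      by (rule smooth_comp_smooth1[OF smooth_inner smooth1_integral_halfline[OF \<psi>]])
  qed
  moreover have "fun_antideriv v \<psi> \<phi> =
      (\<lambda>x. line_integral {..0} v \<phi> x - line_integral UNIV v \<phi> x * integral {..x \<bullet> v} \<psi>)"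
    using fun_antideriv_eq[OF v \<phi> smooth1_continuous_on[OF \<psi>(1)] \<psi>(2)] by auto
  ultimately show ?thesis
    by simp
qed

lemma fun_antideriv_eq_beyond:
  fixes v :: "real^'n::finite"
  assumes v: "norm v = 1" and \<phi>: "test_fun_on UNIV \<phi>"
    and \<psi>: "continuous_on UNIV \<psi>" "\<And>s. s \<notin> {a..b} \<Longrightarrow> \<psi> s = 0" "integral UNIV \<psi> = 1"
    and x: "b \<le> x \<bullet> v"
  shows "fun_antideriv v \<psi> \<phi> x = line_integral {..0} v \<phi> x - line_integral UNIV v \<phi> x"
  using fun_antideriv_eq[OF v \<phi> \<psi>(1,2)] integral_halfline_above[OF \<psi>(1,2) x] \<psi>(3) by simp

lemma fun_antideriv_eq_0:
  fixes v :: "real^'n::finite"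
  assumes v: "norm v = 1" and \<phi>: "test_fun_on UNIV \<phi>"
    and \<psi>: "continuous_on UNIV \<psi>" "\<And>s. s \<notin> {a..b} \<Longrightarrow> \<psi> s = 0" "integral UNIV \<psi> = 1"
    and x: "b \<le> x \<bullet> v" and ray: "\<And>r. r > 0 \<Longrightarrow> \<phi> (x + r *\<^sub>R v) = 0"
  shows "fun_antideriv v \<psi> \<phi> x = 0"
proof -
  have "line_integral {..0} v \<phi> x = line_integral UNIV v \<phi> x"
    unfolding line_integral_def using ray by (intro integral_set_cong) (simp add: not_le)
  then show ?thesis
    using fun_antideriv_eq_beyond[OF v \<phi> \<psi> x] by simp
qed

section \<open>Admissible \<open>\<psi>\<^sub>0\<close> and the distributional antiderivative\<close>

lemma tmin_le_inner: "y \<in> dsupp w \<Longrightarrow> tmin v w \<le> ereal (y \<bullet> v)"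
  unfolding tmin_def by (rule Inf_lower) (rule imageI)

lemma bounded_inner_lower_bound:
  assumes "bounded D"
  obtains c where "\<And>y. y \<in> D \<Longrightarrow> c \<le> y \<bullet> v"
proof -
  obtain B where B: "\<And>y. y \<in> D \<Longrightarrow> norm y \<le> B"
    using assms unfolding bounded_iff by blast
  have "- (B * norm v) \<le> y \<bullet> v" if "y \<in> D" for y
    using Cauchy_Schwarz_ineq2[of y v] B[OF that] mult_right_mono[OF B[OF that] norm_ge_zero, of v]
    by linarith
  then show ?thesis
    by (rule that)
qed
lemma admissible_psi0I:
  assumes "smooth1 \<psi>" and "\<And>s. s \<notin> {a..b} \<Longrightarrow> \<psi> s = 0" and "(\<psi> has_integral 1) UNIV"
    and "b < c" and "\<And>y. y \<in> dsupp w \<Longrightarrow> c \<le> y \<bullet> v"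
  shows "admissible_psi0 v w \<psi>"
proof -
  have "{s. \<psi> s \<noteq> 0} \<subseteq> {a..b}"
    using assms(2) by blast
  then have supp: "closure {s. \<psi> s \<noteq> 0} \<subseteq> {a..b}"
    by (rule closure_minimal) simp
  have "ereal c \<le> tmin v w"
    unfolding tmin_def using assms(5) by (auto intro!: Inf_greatest)
  moreover have "ereal s < ereal c" if "s \<in> closure {s. \<psi> s \<noteq> 0}" for s
    using supp that assms(4) by auto
  ultimately have "ereal s < tmin v w" if "s \<in> closure {s. \<psi> s \<noteq> 0}" for s
    using that by (meson less_le_trans)
  moreover have "compact (closure {s. \<psi> s \<noteq> 0})"
    using compact_Int_closed[of "{a..b}" "closure {s. \<psi> s \<noteq> 0}"] supp by (simp add: Int_absorb1)
  ultimately show ?thesis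
    unfolding admissible_psi0_def using assms(1,3) by auto
qed

lemma admissible_psi0_bounds:
  assumes "admissible_psi0 v w \<psi>"
  obtains a b where "\<And>s. s \<notin> {a..b} \<Longrightarrow> \<psi> s = 0" and "\<And>y. y \<in> dsupp w \<Longrightarrow> b < y \<bullet> v"
proof -
  define S where "S = closure {s. \<psi> s \<noteq> 0}"
  have "compact S" and below: "\<And>s. s \<in> S \<Longrightarrow> ereal s < tmin v w"
    using assms unfolding admissible_psi0_def S_def by blast+
  have "S \<noteq> {}"
  proof
    assume "S = {}"
    then have "\<psi> = (\<lambda>s. 0)"
      using closure_subset[of "{s. \<psi> s \<noteq> 0}"] unfolding S_def by auto
    then show False
      using assms has_integral_unique[of \<psi> 0 UNIV 1] unfolding admissible_psi0_def by auto
  qed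
  obtain a where a: "\<And>s. s \<in> S \<Longrightarrow> a \<le> s"
    using compact_attains_inf[OF \<open>compact S\<close> \<open>S \<noteq> {}\<close>] by blast
  obtain b where "b \<in> S" and b: "\<And>s. s \<in> S \<Longrightarrow> s \<le> b"
    using compact_attains_sup[OF \<open>compact S\<close> \<open>S \<noteq> {}\<close>] by blast
  show ?thesis
  proof (rule that)
    show "\<psi> s = 0" if s: "s \<notin> {a..b}" for s
    proof -
      have "s \<notin> S"
        using a b s by force
      then show ?thesis
        using closure_subset[of "{s. \<psi> s \<noteq> 0}"] unfolding S_def by auto
    qed
    show "b < y \<bullet> v" if y: "y \<in> dsupp w" for y
    proof -
      have "ereal b < ereal (y \<bullet> v)"
        using below[OF \<open>b \<in> S\<close>] tmin_le_inner[OF y, of v] by (rule less_le_trans)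
      then show ?thesis
        by simp
    qed
  qed
qed

lemma compact_distr_fun_antideriv_cong:
  fixes v :: "real^'n::finite"
  assumes v: "norm v = 1" and w: "compact_distr w" and \<phi>: "test_fun_on UNIV \<phi>"
    and \<psi>: "admissible_psi0 v w \<psi>" and \<psi>': "admissible_psi0 v w \<psi>'"
  shows "w (fun_antideriv v \<psi> \<phi>) = w (fun_antideriv v \<psi>' \<phi>)"
proof -
  obtain a b where ab: "\<And>s. s \<notin> {a..b} \<Longrightarrow> \<psi> s = 0" "\<And>y. y \<in> dsupp w \<Longrightarrow> b < y \<bullet> v"
    using admissible_psi0_bounds[OF \<psi>] by metis
  obtain a' b' where ab': "\<And>s. s \<notin> {a'..b'} \<Longrightarrow> \<psi>' s = 0" "\<And>y. y \<in> dsupp w \<Longrightarrow> b' < y \<bullet> v"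
    using admissible_psi0_bounds[OF \<psi>'] by metis
  have \<psi>_props: "smooth1 \<psi>" "integral UNIV \<psi> = 1" "smooth1 \<psi>'" "integral UNIV \<psi>' = 1"
    using \<psi> \<psi>' unfolding admissible_psi0_def by (auto intro: integral_unique)
  have smooth: "smooth (fun_antideriv v \<psi> \<phi>)" "smooth (fun_antideriv v \<psi>' \<phi>)"
    using smooth_fun_antideriv[OF v \<phi> \<psi>_props(1) ab(1)] smooth_fun_antideriv[OF v \<phi> \<psi>_props(3) ab'(1)]
    by blast+
  have "w (\<lambda>x. fun_antideriv v \<psi> \<phi> x - fun_antideriv v \<psi>' \<phi> x) = 0"
  proof (rule compact_distr_eq_0_near_dsupp[OF w smooth_diff[OF smooth]])
    show "open {x. max b b' < x \<bullet> v}"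
      by (intro open_Collect_less continuous_intros)
    show "dsupp w \<subseteq> {x. max b b' < x \<bullet> v}"
      using ab(2) ab'(2) by auto
    show "fun_antideriv v \<psi> \<phi> x - fun_antideriv v \<psi>' \<phi> x = 0" if "x \<in> {x. max b b' < x \<bullet> v}" for x
      using that fun_antideriv_eq_beyond[OF v \<phi> smooth1_continuous_on[OF \<psi>_props(1)] ab(1) \<psi>_props(2)]
        fun_antideriv_eq_beyond[OF v \<phi> smooth1_continuous_on[OF \<psi>_props(3)] ab'(1) \<psi>_props(4)]
      by simp
  qed
  then show ?thesis
    using compact_distr_diff[OF w smooth] by simp
qed

lemma distr_antideriv_eq:
  fixes v :: "real^'n::finite"
  assumes "norm v = 1" and "compact_distr w" and "test_fun_on UNIV \<phi>" and "admissible_psi0 v w \<psi>"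
  shows "distr_antideriv v w \<phi> = - w (fun_antideriv v \<psi> \<phi>)"
  unfolding distr_antideriv_def
  using compact_distr_fun_antideriv_cong[OF assms(1-3) someI[of "admissible_psi0 v w", OF assms(4)] assms(4)]
  by simp

lemma closed_backward_shadow:
  fixes v :: "real^'n::finite"
  assumes "norm v = 1" and "compact S"
  shows "closed {z - t *\<^sub>R v | z t. z \<in> S \<and> t \<ge> 0}"
proof -
  define ray where "ray = {y::real^'n. y = (y \<bullet> v) *\<^sub>R v} \<inter> {y. y \<bullet> v \<le> 0}"
  have "closed ray"
    unfolding ray_def by (intro closed_Int closed_Collect_eq closed_Collect_le continuous_intros)
  moreover have "{z - t *\<^sub>R v | z t. z \<in> S \<and> t \<ge> 0} = (\<Union>z\<in>S. \<Union>y\<in>ray. {z + y})"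
  proof (intro equalityI subsetI)
    fix x
    assume "x \<in> {z - t *\<^sub>R v | z t. z \<in> S \<and> t \<ge> 0}"
    then obtain z t where "x = z + (- t) *\<^sub>R v" "z \<in> S" "t \<ge> 0"
      by auto
    moreover have "(- t) *\<^sub>R v \<in> ray"
      using assms(1) \<open>t \<ge> 0\<close> by (simp add: ray_def power2_norm_eq_inner[symmetric])
    ultimately show "x \<in> (\<Union>z\<in>S. \<Union>y\<in>ray. {z + y})"
      by blast
  next
    fix x
    assume "x \<in> (\<Union>z\<in>S. \<Union>y\<in>ray. {z + y})"
    then obtain z y where z: "z \<in> S" and "x = z + y" "y = (y \<bullet> v) *\<^sub>R v" and y: "y \<bullet> v \<le> 0"
      unfolding ray_def by blast
    then have "x = z - (- (y \<bullet> v)) *\<^sub>R v"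
      by (metis diff_minus_eq_add scaleR_minus_left)
    with z y show "x \<in> {z - t *\<^sub>R v | z t. z \<in> S \<and> t \<ge> 0}"
      by (intro CollectI exI[of _ z] exI[of _ "- (y \<bullet> v)"]) simp
  qed
  ultimately show ?thesis
    using compact_closed_sums[OF assms(2)] by simp
qed

lemma forward_ray_notin:
  fixes x v :: "'a::real_vector"
  assumes "x \<notin> {z - t *\<^sub>R v | z t. z \<in> S \<and> t \<ge> 0}" and "r \<ge> 0"
  shows "x + r *\<^sub>R v \<notin> S"
proof
  assume "x + r *\<^sub>R v \<in> S"
  with \<open>r \<ge> 0\<close> have "x \<in> {z - t *\<^sub>R v | z t. z \<in> S \<and> t \<ge> 0}"
    by (intro CollectI exI[of _ "x + r *\<^sub>R v"] exI[of _ r]) simp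
  with assms(1) show False
    by blast
qed

lemma backward_shadow_subset:
  fixes v :: "'a::real_vector"
  assumes "\<forall>t\<ge>0. \<forall>x\<in>U. x - t *\<^sub>R v \<in> U" and "S \<subseteq> U"
  shows "{z - t *\<^sub>R v | z t. z \<in> S \<and> t \<ge> 0} \<subseteq> U"
proof
  fix y
  assume "y \<in> {z - t *\<^sub>R v | z t. z \<in> S \<and> t \<ge> 0}"
  then obtain z t where "y = z - t *\<^sub>R v" and "z \<in> S" and "t \<ge> 0"
    by blast
  with assms show "y \<in> U"
    by blast
qed

lemma compact_distr_eq_on_fun_antideriv:
  fixes v :: "real^'n::finite"
  assumes v: "norm v = 1" and U: "open U" and backward: "\<forall>t\<ge>0. \<forall>x\<in>U. x - t *\<^sub>R v \<in> U"
    and w1: "compact_distr w1" and w2: "compact_distr w2" and eq: "distr_eq_on U w1 w2"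
    and \<phi>: "test_fun_on U \<phi>"
    and \<psi>: "smooth1 \<psi>" "\<And>s. s \<notin> {a..b} \<Longrightarrow> \<psi> s = 0" "integral UNIV \<psi> = 1"
    and beyond: "\<And>y. y \<in> dsupp w1 \<union> dsupp w2 \<Longrightarrow> b < y \<bullet> v"
  shows "w1 (fun_antideriv v \<psi> \<phi>) = w2 (fun_antideriv v \<psi> \<phi>)"
proof -
  define S where "S = closure {x. \<phi> x \<noteq> 0}"
  define C where "C = {z - t *\<^sub>R v | z t. z \<in> S \<and> t \<ge> 0}"
  have \<phi>': "test_fun_on UNIV \<phi>"
    using \<phi> unfolding test_fun_on_def by blast
  have "closed C"
    unfolding C_def S_def using \<phi> by (intro closed_backward_shadow[OF v]) (simp add: test_fun_on_def)
  have "C \<subseteq> U"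
    unfolding C_def using \<phi> by (intro backward_shadow_subset[OF backward]) (simp add: S_def test_fun_on_def)
  have "(\<lambda>\<phi>. w1 \<phi> - w2 \<phi>) (fun_antideriv v \<psi> \<phi>) = 0"
  proof (rule compact_distr_eq_0_near_dsupp[OF compact_distr_minus[OF w1 w2]])
    show "smooth (fun_antideriv v \<psi> \<phi>)"
      by (rule smooth_fun_antideriv[OF v \<phi>' \<psi>(1,2)])
    show "open ({x. b < x \<bullet> v} - C)"
      using \<open>closed C\<close> by (intro open_Diff open_Collect_less continuous_intros)
    show "dsupp (\<lambda>\<phi>. w1 \<phi> - w2 \<phi>) \<subseteq> {x. b < x \<bullet> v} - C"
    proof
      fix y
      assume "y \<in> dsupp (\<lambda>\<phi>. w1 \<phi> - w2 \<phi>)"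
      then have "y \<in> dsupp w1 \<union> dsupp w2" and "y \<notin> U"
        using dsupp_minus_subset[OF U eq] by blast+
      then show "y \<in> {x. b < x \<bullet> v} - C"
        using beyond \<open>C \<subseteq> U\<close> by blast
    qed
    show "fun_antideriv v \<psi> \<phi> x = 0" if x: "x \<in> {x. b < x \<bullet> v} - C" for x
    proof (rule fun_antideriv_eq_0[OF v \<phi>' smooth1_continuous_on[OF \<psi>(1)] \<psi>(2,3)])
      show "b \<le> x \<bullet> v"
        using x by simp
      show "\<phi> (x + r *\<^sub>R v) = 0" if "r > 0" for r
      proof -
        have "x + r *\<^sub>R v \<notin> S"
          using x \<open>r > 0\<close> unfolding C_def by (intro forward_ray_notin) auto
        then show ?thesis
          unfolding S_def using closure_subset[of "{x. \<phi> x \<noteq> 0}"] by blast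
      qed
    qed
  qed
  then show ?thesis
    by simp
qed

theorem proposition1p5:
  fixes v :: "real^'n" and U :: "(real^'n) set"
    and w1 w2 :: "(real^'n \<Rightarrow> real) \<Rightarrow> complex"
  assumes "norm v = 1"
    and "open U"
    and "\<forall>t\<ge>0. \<forall>x\<in>U. x - t *\<^sub>R v \<in> U"
    and "compact_distr w1" and "compact_distr w2"
    and "distr_eq_on U w1 w2"
  shows "distr_eq_on U (distr_antideriv v w1) (distr_antideriv v w2)"
proof -
  have "bounded (dsupp w1 \<union> dsupp w2)"
    using bounded_dsupp[OF assms(4)] bounded_dsupp[OF assms(5)] by simp
  then obtain c where c: "\<And>y. y \<in> dsupp w1 \<union> dsupp w2 \<Longrightarrow> c \<le> y \<bullet> v"
    using bounded_inner_lower_bound by blast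
  obtain \<psi> where \<psi>: "smooth1 \<psi>" "\<And>s. s \<notin> {c - 2..c - 1} \<Longrightarrow> \<psi> s = 0" "(\<psi> has_integral 1) UNIV"
    using smooth1_probability_density_exists[of "c - 2" "c - 1"] by auto
  have admissible: "admissible_psi0 v w \<psi>" if "dsupp w \<subseteq> dsupp w1 \<union> dsupp w2" for w
    using c that by (intro admissible_psi0I[OF \<psi>, where c = c]) auto
  have beyond: "c - 1 < y \<bullet> v" if "y \<in> dsupp w1 \<union> dsupp w2" for y
    using c[OF that] by simp
  show ?thesis
    unfolding distr_eq_on_def
  proof (intro allI impI)
    fix \<phi>
    assume \<phi>: "test_fun_on U \<phi>"
    then have \<phi>': "test_fun_on UNIV \<phi>"
      unfolding test_fun_on_def by blast
    have "w1 (fun_antideriv v \<psi> \<phi>) = w2 (fun_antideriv v \<psi> \<phi>)"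
      by (rule compact_distr_eq_on_fun_antideriv[OF assms \<phi> \<psi>(1,2) integral_unique[OF \<psi>(3)] beyond])
    then show "distr_antideriv v w1 \<phi> = distr_antideriv v w2 \<phi>"
      using distr_antideriv_eq[OF assms(1,4) \<phi>' admissible] distr_antideriv_eq[OF assms(1,5) \<phi>' admissible]
      by simp
  qed
qed

end
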